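(* Let $n\ge 2$ and let $\mathcal{H}^n=\{(y_0,y_1,\dots,y_n)\in\mathbb{R}^{n+1}\mid -y_0^2+y_1^2+\dots+y_n^2=-1,\ y_0>0\}$ be the hyperbolic space modelled as a hyperboloid in Minkowski space $M^{n+1}$, with the Riemannian metric induced from the Lorentzian metric $-dy_0^2+dy_1^2+\dots+dy_n^2$. Let $h:\mathbb{R}^{n-1}\to\mathbb{C}$ be a non-constant function harmonic with respect to the Euclidean metric on $\mathbb{R}^{n-1}$, let $r\ge 1$ be an integer, and let $p_r:\mathbb{R}^+\to\mathbb{C}$ be given by $p_r(t)=(a_r+b_r t^{n-1})\cdot\log(t)^{r-1}$, where $(a_r,b_r)\in\mathbb{C}^2$ is non-zero. Then the function $f:\mathcal{H}^n\to\mathbb{C}$ given by $$f(y_0,y_1,\dots,y_n)=p_r\Bigl(\frac{2\sqrt{y_0^2-y_1^2-\dots-y_n^2}}{y_0+y_1}\Bigr)\cdot h\Bigl(\frac{2y_2}{y_0+y_1},\dots,\frac{2y_n}{y_0+y_1}\Bigr)$$ is proper $r$-harmonic on $\mathcal{H}^n$.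
   Context: For a Riemannian manifold $(M,g)$ the Laplace–Beltrami operator (tension field) acts on complex-valued functions by $\tau(f)=\sum_{i,j}\frac{1}{\sqrt{|g|}}\frac{\partial}{\partial x_j}\bigl(g^{ij}\sqrt{|g|}\frac{\partial f}{\partial x_i}\bigr)$ in local coordinates. Iterates: $\tau^0(f)=f$, $\tau^r(f)=\tau(\tau^{r-1}(f))$. A function $f$ is $r$-harmonic if $\tau^r(f)=0$, and proper $r$-harmonic if moreover $\tau^{r-1}(f)$ does not vanish identically. *)

theory Defs
  imports "HOL-Analysis.Analysis"
begin

definition pd :: "'k::finite \<Rightarrow> (real^'k \<Rightarrow> complex) \<Rightarrow> real^'k \<Rightarrow> complex" where
  "pd i F x = vector_derivative (\<lambda>s. F (x + s *\<^sub>R axis i 1)) (at 0)"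

definition pdv :: "'k::finite \<Rightarrow> (real^'k \<Rightarrow> 'b::real_normed_vector) \<Rightarrow> real^'k \<Rightarrow> 'b" where
  "pdv i F x = vector_derivative (\<lambda>s. F (x + s *\<^sub>R axis i 1)) (at 0)"

definition lb_coord :: "(real^'k \<Rightarrow> real^'k^'k) \<Rightarrow> (real^'k::finite \<Rightarrow> complex) \<Rightarrow> real^'k \<Rightarrow> complex" where
  "lb_coord g F x =
     (\<Sum>i\<in>UNIV. \<Sum>j\<in>UNIV.
        complex_of_real (1 / sqrt \<bar>det (g x)\<bar>) *
        pd j (\<lambda>z. complex_of_real (matrix_inv (g z) $ i $ j * sqrt \<bar>det (g z)\<bar>) * pd i F z) x)"

definition euclid_harmonic :: "(real^'k::finite \<Rightarrow> complex) \<Rightarrow> bool" where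
  "euclid_harmonic h \<longleftrightarrow>
     (\<forall>x. h differentiable (at x)) \<and>
     (\<forall>i x. pd i h differentiable (at x)) \<and>
     (\<forall>i j. continuous_on UNIV (pd j (pd i h))) \<and>
     (\<forall>x. (\<Sum>i\<in>UNIV. pd i (pd i h) x) = 0)"

text \<open>Minkowski space M^{k+1}: points (y0, w) with w = (y1,...,yk) indexed by 'k,
  Lorentzian form -dy0^2 + dy1^2 + ... + dyk^2.\<close>
definition mink :: "real \<times> (real^'k::finite) \<Rightarrow> real \<times> (real^'k) \<Rightarrow> real" where
  "mink u v = - fst u * fst v + (\<Sum>i\<in>UNIV. snd u $ i * snd v $ i)"

definition hyperboloid :: "(real \<times> (real^'k::finite)) set" where
  "hyperboloid = {(y0, w). - (y0 ^ 2) + (\<Sum>i\<in>UNIV. (w $ i)^2) = -1 \<and> y0 > 0}"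

text \<open>Global chart of the hyperboloid: (y1,...,yk) maps to (sqrt(1+|y|^2), y1,...,yk);
  its inverse is the projection forgetting y0.\<close>
definition hchart :: "real^'k::finite \<Rightarrow> real \<times> (real^'k)" where
  "hchart x = (sqrt (1 + (\<Sum>i\<in>UNIV. (x $ i)^2)), x)"

definition hmetric :: "real^'k::finite \<Rightarrow> real^'k^'k" where
  "hmetric x = (\<chi> i j. mink (pdv i hchart x) (pdv j hchart x))"

text \<open>Tension field (Laplace--Beltrami operator) on the hyperboloid, acting on
  complex-valued functions on it (only the values on the hyperboloid matter).\<close>
definition tau_H :: "(real \<times> (real^'k::finite) \<Rightarrow> complex) \<Rightarrow> (real \<times> (real^'k) \<Rightarrow> complex)" where
  "tau_H F y = lb_coord hmetric (F \<circ> hchart) (snd y)"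

definition proper_r_harmonic_H :: "nat \<Rightarrow> (real \<times> (real^'k::finite) \<Rightarrow> complex) \<Rightarrow> bool" where
  "proper_r_harmonic_H r f \<longleftrightarrow>
     (\<forall>y\<in>hyperboloid. (tau_H ^^ r) f y = 0) \<and>
     \<not> (\<forall>y\<in>hyperboloid. (tau_H ^^ (r - 1)) f y = 0)"

end

theory Submission
  imports Defs "HOL-Computational_Algebra.Polynomial"
begin

text \<open>
  In upper half-space coordinates T = 2 / (y0 + y1), Z = T (y2, ..., yn) the hyperbolic metric
  becomes (dT^2 + |dZ|^2) / T^2: the functions T and Z_l have pairwise orthogonal gradients of
  length T, Z_l is harmonic and the Laplacian of T is (2 - n) T. Hence on a separated function
  Q(T) h(Z) with h Euclidean harmonic the Laplace-Beltrami operator only acts on Q, as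
  T^2 Q'' + (2 - n) T Q'. In the variable s = ln T this is q'' - (n - 1) q', which maps
  A(s) + e^((n-1) s) B(s), for polynomials A and B, to
  (A'' - (n - 1) A') + e^((n-1) s) (B'' + (n - 1) B'): both degrees drop by one and leading
  coefficients stay nonzero. Starting from degree r - 1, the (r - 1)-st iterate is
  (alpha + beta T^(n-1)) h(Z) with (alpha, beta) nonzero, which does not vanish identically,
  while the r-th iterate is zero.

  All computations take place in the global chart (y1, ..., yn) of the hyperboloid, where the
  inverse metric is the matrix I + y y^T and the Laplace-Beltrami operator becomes the second
  order operator with these coefficients and first-order part n y.
\<close>
subsection \<open>Partial derivatives\<close>

lemma pdv_has_derivative:
  assumes "(F has_derivative F') (at x)"
  shows "pdv i F x = F' (axis i 1)"
proof -
  have line: "((\<lambda>s. x + s *\<^sub>R axis i (1::real)) has_derivative (\<lambda>s. s *\<^sub>R axis i 1)) (at 0)"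
    by (auto intro!: derivative_eq_intros)
  have "((\<lambda>s. F (x + s *\<^sub>R axis i 1)) has_derivative (\<lambda>s. F' (s *\<^sub>R axis i 1))) (at 0)"
    using has_derivative_compose[OF line] assms by simp
  moreover have "(\<lambda>s. F' (s *\<^sub>R axis i 1)) = (\<lambda>s. s *\<^sub>R F' (axis i 1))"
    using has_derivative_linear[OF assms] by (simp add: linear_scale)
  ultimately have "((\<lambda>s. F (x + s *\<^sub>R axis i 1)) has_vector_derivative F' (axis i 1)) (at 0)"
    by (simp add: has_vector_derivative_def)
  then show ?thesis unfolding pdv_def by (rule vector_derivative_at)
qed

lemma pd_has_derivative:
  assumes "(F has_derivative F') (at x)"
  shows "pd i F x = F' (axis i 1)"
  using pdv_has_derivative[OF assms] by (simp add: pd_def pdv_def)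

lemma pd_add:
  assumes "A differentiable (at x)" "B differentiable (at x)"
  shows "pd i (\<lambda>x. A x + B x) x = pd i A x + pd i B x"
proof -
  have A: "(A has_derivative frechet_derivative A (at x)) (at x)"
   and B: "(B has_derivative frechet_derivative B (at x)) (at x)"
    using assms frechet_derivative_works by blast+
  show ?thesis
    using pd_has_derivative[OF has_derivative_add[OF A B]] pd_has_derivative[OF A]
      pd_has_derivative[OF B] by simp
qed

lemma pd_mult:
  fixes A B :: "real^'k::finite \<Rightarrow> complex"
  assumes "A differentiable (at x)" "B differentiable (at x)"
  shows "pd i (\<lambda>x. A x * B x) x = A x * pd i B x + pd i A x * B x"
proof -
  have A: "(A has_derivative frechet_derivative A (at x)) (at x)"
   and B: "(B has_derivative frechet_derivative B (at x)) (at x)"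
    using assms frechet_derivative_works by blast+
  show ?thesis
    using pd_has_derivative[OF has_derivative_mult[OF A B]] pd_has_derivative[OF A]
      pd_has_derivative[OF B] by simp
qed

lemma pd_sum:
  fixes A :: "'l \<Rightarrow> real^'k::finite \<Rightarrow> complex"
  assumes "\<And>l. l \<in> L \<Longrightarrow> A l differentiable (at x)"
  shows "pd i (\<lambda>x. \<Sum>l\<in>L. A l x) x = (\<Sum>l\<in>L. pd i (A l) x)"
proof -
  have A: "\<And>l. l \<in> L \<Longrightarrow> (A l has_derivative frechet_derivative (A l) (at x)) (at x)"
    using assms frechet_derivative_works by blast
  show ?thesis
    using pd_has_derivative[OF has_derivative_sum[OF A]] pd_has_derivative[OF A] by simp
qed

lemma pd_const [simp]: "pd i (\<lambda>x::real^'k::finite. c :: complex) = (\<lambda>x. 0)"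
proof
  fix x
  show "pd i (\<lambda>x. c) x = 0" using pd_has_derivative[of "\<lambda>x. c" "\<lambda>x. 0" x i] by simp
qed

lemma pd_of_real:
  fixes R :: "real^'k::finite \<Rightarrow> real"
  assumes "(R has_derivative R') (at x)"
  shows "pd i (\<lambda>x. complex_of_real (R x)) x = complex_of_real (R' (axis i 1))"
  by (rule pd_has_derivative[OF has_derivative_compose[OF assms
        bounded_linear_imp_has_derivative[OF bounded_linear_of_real]]])

lemma differentiable_of_real:
  fixes R :: "real^'k::finite \<Rightarrow> real"
  assumes "(R has_derivative R') (at x)"
  shows "(\<lambda>x. complex_of_real (R x)) differentiable (at x)"
  using has_derivative_compose[OF assms bounded_linear_imp_has_derivative[OF bounded_linear_of_real]]
  unfolding differentiable_def by blast

lemma pd_comp_real: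
  fixes T :: "real^'k::finite \<Rightarrow> real" and Q :: "real \<Rightarrow> complex"
  assumes "T differentiable (at x)" "(Q has_vector_derivative q) (at (T x))"
  shows "pd i (\<lambda>x. Q (T x)) x = q * pd i (\<lambda>x. complex_of_real (T x)) x"
proof -
  obtain T' where T: "(T has_derivative T') (at x)"
    using assms(1) unfolding differentiable_def by blast
  have "((\<lambda>x. Q (T x)) has_derivative (\<lambda>v. T' v *\<^sub>R q)) (at x)"
    using has_derivative_compose[OF T assms(2)[unfolded has_vector_derivative_def]] .
  from pd_has_derivative[OF this] show ?thesis
    using pd_of_real[OF T] by (simp add: scaleR_conv_of_real mult.commute)
qed

lemma differentiable_comp_real:
  fixes T :: "real^'k::finite \<Rightarrow> real" and Q :: "real \<Rightarrow> complex"
  assumes "T differentiable (at x)" "(Q has_vector_derivative q) (at (T x))"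
  shows "(\<lambda>x. Q (T x)) differentiable (at x)"
  using differentiable_chain_at[OF assms(1)] assms(2)
  by (auto simp: o_def has_vector_derivative_def differentiable_def)

lemma pd_comp:
  fixes Z :: "real^'k::finite \<Rightarrow> real^'m::finite" and h :: "real^'m \<Rightarrow> complex"
  assumes "Z differentiable (at x)" "h differentiable (at (Z x))"
  shows "pd i (\<lambda>x. h (Z x)) x =
    (\<Sum>l\<in>UNIV. pd l h (Z x) * pd i (\<lambda>x. complex_of_real (Z x $ l)) x)"
proof -
  obtain Z' where Z: "(Z has_derivative Z') (at x)"
    using assms(1) unfolding differentiable_def by blast
  obtain h' where h: "(h has_derivative h') (at (Z x))"
    using assms(2) unfolding differentiable_def by blast
  have Zl: "((\<lambda>x. Z x $ l) has_derivative (\<lambda>v. Z' v $ l)) (at x)" for l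
    using bounded_linear.has_derivative[OF bounded_linear_vec_nth Z] .
  have expand: "h' v = (\<Sum>l\<in>UNIV. complex_of_real (v $ l) * h' (axis l 1))" for v
  proof -
    have "h' v = h' (\<Sum>l\<in>UNIV. (v $ l) *\<^sub>R axis l 1)"
      using basis_expansion[of v] by (simp add: scalar_mult_eq_scaleR)
    also have "\<dots> = (\<Sum>l\<in>UNIV. (v $ l) *\<^sub>R h' (axis l 1))"
      using has_derivative_linear[OF h] by (simp add: linear_sum linear_scale)
    finally show ?thesis by (simp add: scaleR_conv_of_real)
  qed
  have "pd i (\<lambda>x. h (Z x)) x = h' (Z' (axis i 1))"
    using pd_has_derivative[OF has_derivative_compose[OF Z h]] .
  also have "\<dots> = (\<Sum>l\<in>UNIV. complex_of_real (Z' (axis i 1) $ l) * h' (axis l 1))"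
    by (rule expand)
  finally show ?thesis using pd_has_derivative[OF h] pd_of_real[OF Zl] by (simp add: mult.commute)
qed

subsection \<open>Second-order differential operators\<close>

definition twice_pd_differentiable :: "(real^'k::finite \<Rightarrow> complex) \<Rightarrow> bool" where
  "twice_pd_differentiable F \<longleftrightarrow>
     (\<forall>x. F differentiable (at x)) \<and> (\<forall>i x. pd i F differentiable (at x))"

definition second_order_op ::
    "(real^'k::finite \<Rightarrow> 'k \<Rightarrow> 'k \<Rightarrow> real) \<Rightarrow> (real^'k \<Rightarrow> 'k \<Rightarrow> real) \<Rightarrow>
     (real^'k \<Rightarrow> complex) \<Rightarrow> real^'k \<Rightarrow> complex" where
  "second_order_op a b F x =
     (\<Sum>i\<in>UNIV. \<Sum>j\<in>UNIV. complex_of_real (a x i j) * pd j (pd i F) x)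
     + (\<Sum>i\<in>UNIV. complex_of_real (b x i) * pd i F x)"

definition grad_form ::
    "(real^'k::finite \<Rightarrow> 'k \<Rightarrow> 'k \<Rightarrow> real) \<Rightarrow>
     (real^'k \<Rightarrow> complex) \<Rightarrow> (real^'k \<Rightarrow> complex) \<Rightarrow> real^'k \<Rightarrow> complex" where
  "grad_form a F G x = (\<Sum>i\<in>UNIV. \<Sum>j\<in>UNIV. complex_of_real (a x i j) * pd i F x * pd j G x)"

lemma twice_pd_differentiableD:
  assumes "twice_pd_differentiable F"
  shows "F differentiable (at x)" "pd i F differentiable (at x)"
  using assms by (auto simp: twice_pd_differentiable_def)

lemma pd_add_fun:
  assumes "twice_pd_differentiable A" "twice_pd_differentiable B"
  shows "pd i (\<lambda>x. A x + B x) = (\<lambda>x. pd i A x + pd i B x)"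
  using pd_add assms twice_pd_differentiableD by blast

lemma pd_mult_fun:
  assumes "twice_pd_differentiable A" "twice_pd_differentiable B"
  shows "pd i (\<lambda>x. A x * B x) = (\<lambda>x. A x * pd i B x + pd i A x * B x)"
  using pd_mult assms twice_pd_differentiableD by blast

lemma pd_comp_real_fun:
  fixes T :: "real^'k::finite \<Rightarrow> real" and Q :: "real \<Rightarrow> complex"
  assumes "\<And>x. T differentiable (at x)" "\<And>x. (Q has_vector_derivative Q1 (T x)) (at (T x))"
  shows "pd i (\<lambda>x. Q (T x)) = (\<lambda>x. Q1 (T x) * pd i (\<lambda>x. complex_of_real (T x)) x)"
  using pd_comp_real assms by blast

lemma pd_comp_fun:
  fixes Z :: "real^'k::finite \<Rightarrow> real^'m::finite" and h :: "real^'m \<Rightarrow> complex"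
  assumes "\<And>x. Z differentiable (at x)" "\<And>x. h differentiable (at x)"
  shows "pd i (\<lambda>x. h (Z x)) =
    (\<lambda>x. \<Sum>l\<in>UNIV. pd l h (Z x) * pd i (\<lambda>x. complex_of_real (Z x $ l)) x)"
  using pd_comp assms by blast

lemma twice_pd_differentiable_add:
  assumes "twice_pd_differentiable A" "twice_pd_differentiable B"
  shows "twice_pd_differentiable (\<lambda>x. A x + B x)"
  using assms unfolding twice_pd_differentiable_def pd_add_fun[OF assms] by auto

lemma twice_pd_differentiable_mult:
  assumes "twice_pd_differentiable A" "twice_pd_differentiable B"
  shows "twice_pd_differentiable (\<lambda>x. A x * B x)"
  using assms unfolding twice_pd_differentiable_def pd_mult_fun[OF assms] by auto

lemma twice_pd_differentiable_comp_real:
  fixes T :: "real^'k::finite \<Rightarrow> real" and Q :: "real \<Rightarrow> complex"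
  assumes "\<And>x. T differentiable (at x)" "twice_pd_differentiable (\<lambda>x. complex_of_real (T x))"
    and "\<And>x. (Q has_vector_derivative Q1 (T x)) (at (T x))"
    and "\<And>x. (Q1 has_vector_derivative Q2 (T x)) (at (T x))"
  shows "twice_pd_differentiable (\<lambda>x. Q (T x))"
  unfolding twice_pd_differentiable_def pd_comp_real_fun[OF assms(1,3)]
  using differentiable_comp_real[OF assms(1) assms(3)] differentiable_comp_real[OF assms(1) assms(4)]
    twice_pd_differentiableD[OF assms(2)]
  by (auto intro!: differentiable_mult)

lemma twice_pd_differentiable_comp:
  fixes Z :: "real^'k::finite \<Rightarrow> real^'m::finite" and h :: "real^'m \<Rightarrow> complex"
  assumes "\<And>x. Z differentiable (at x)"
    and "\<And>l. twice_pd_differentiable (\<lambda>x. complex_of_real (Z x $ l))"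
    and "twice_pd_differentiable h"
  shows "twice_pd_differentiable (\<lambda>x. h (Z x))"
proof -
  have hZ: "(\<lambda>x. h (Z x)) differentiable (at x)" for x
    using differentiable_chain_at[OF assms(1) twice_pd_differentiableD(1)[OF assms(3)]]
    by (simp add: o_def)
  have pdhZ: "(\<lambda>x. pd l h (Z x)) differentiable (at x)" for l x
    using differentiable_chain_at[OF assms(1) twice_pd_differentiableD(2)[OF assms(3)]]
    by (simp add: o_def)
  show ?thesis
    unfolding twice_pd_differentiable_def
      pd_comp_fun[OF assms(1) twice_pd_differentiableD(1)[OF assms(3)]]
    using hZ pdhZ twice_pd_differentiableD[OF assms(2)]
    by (auto intro!: differentiable_sum differentiable_mult)
qed

lemma grad_form_sym:
  assumes "\<And>i j. a x i j = a x j i"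
  shows "grad_form a F G x = grad_form a G F x"
  unfolding grad_form_def by (subst sum.swap) (simp add: assms mult_ac)

lemma grad_form_add_left:
  assumes "A differentiable (at x)" "B differentiable (at x)"
  shows "grad_form a (\<lambda>x. A x + B x) G x = grad_form a A G x + grad_form a B G x"
  unfolding grad_form_def pd_add[OF assms] by (simp add: algebra_simps sum.distrib)

lemma grad_form_add_right:
  assumes "A differentiable (at x)" "B differentiable (at x)"
  shows "grad_form a G (\<lambda>x. A x + B x) x = grad_form a G A x + grad_form a G B x"
  unfolding grad_form_def pd_add[OF assms] by (simp add: algebra_simps sum.distrib)

lemma grad_form_mult_left:
  assumes "A differentiable (at x)" "B differentiable (at x)"
  shows "grad_form a (\<lambda>x. A x * B x) G x = A x * grad_form a B G x + B x * grad_form a A G x"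
  unfolding grad_form_def pd_mult[OF assms]
  by (simp add: algebra_simps sum.distrib sum_distrib_left)

lemma grad_form_mult_right:
  assumes "A differentiable (at x)" "B differentiable (at x)"
  shows "grad_form a G (\<lambda>x. A x * B x) x = A x * grad_form a G B x + B x * grad_form a G A x"
  unfolding grad_form_def pd_mult[OF assms]
  by (simp add: algebra_simps sum.distrib sum_distrib_left)

lemma grad_form_comp_real:
  fixes T :: "real^'k::finite \<Rightarrow> real" and Q :: "real \<Rightarrow> complex"
  assumes "T differentiable (at x)" "(Q has_vector_derivative q) (at (T x))"
  shows "grad_form a (\<lambda>x. Q (T x)) G x = q * grad_form a (\<lambda>x. complex_of_real (T x)) G x"
  unfolding grad_form_def pd_comp_real[OF assms] by (simp add: algebra_simps sum_distrib_left)

lemma grad_form_comp: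
  fixes Z :: "real^'k::finite \<Rightarrow> real^'m::finite" and h :: "real^'m \<Rightarrow> complex"
  assumes "Z differentiable (at x)" "h differentiable (at (Z x))"
  shows "grad_form a F (\<lambda>x. h (Z x)) x =
    (\<Sum>l\<in>UNIV. pd l h (Z x) * grad_form a F (\<lambda>x. complex_of_real (Z x $ l)) x)"
proof -
  have "grad_form a F (\<lambda>x. h (Z x)) x = (\<Sum>i\<in>UNIV. \<Sum>j\<in>UNIV. \<Sum>l\<in>UNIV. pd l h (Z x) *
      (complex_of_real (a x i j) * pd i F x * pd j (\<lambda>x. complex_of_real (Z x $ l)) x))"
    unfolding grad_form_def pd_comp[OF assms] by (simp add: sum_distrib_left algebra_simps)
  also have "\<dots> = (\<Sum>l\<in>UNIV. pd l h (Z x) * grad_form a F (\<lambda>x. complex_of_real (Z x $ l)) x)"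
    unfolding grad_form_def sum_distrib_left by (subst (2) sum.swap, subst sum.swap, simp)
  finally show ?thesis .
qed

lemma second_order_op_add:
  assumes "twice_pd_differentiable A" "twice_pd_differentiable B"
  shows "second_order_op a b (\<lambda>x. A x + B x) x = second_order_op a b A x + second_order_op a b B x"
proof -
  have "pd j (\<lambda>x. pd i A x + pd i B x) x = pd j (pd i A) x + pd j (pd i B) x" for i j
    by (rule pd_add) (auto intro!: twice_pd_differentiableD assms)
  then show ?thesis
    unfolding second_order_op_def pd_add_fun[OF assms] by (simp add: algebra_simps sum.distrib)
qed

lemma pd_pd_mult:
  assumes "twice_pd_differentiable A" "twice_pd_differentiable B"
  shows "pd j (pd i (\<lambda>x. A x * B x)) x =
    A x * pd j (pd i B) x + pd j A x * pd i B x + pd i A x * pd j B x + pd j (pd i A) x * B x"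
proof -
  note diff = twice_pd_differentiableD[OF assms(1)] twice_pd_differentiableD[OF assms(2)]
  have "pd j (pd i (\<lambda>x. A x * B x)) x =
      pd j (\<lambda>x. A x * pd i B x) x + pd j (\<lambda>x. pd i A x * B x) x"
    unfolding pd_mult_fun[OF assms] by (rule pd_add) (auto intro!: differentiable_mult diff)
  also have "\<dots> = A x * pd j (pd i B) x + pd j A x * pd i B x + (pd i A x * pd j B x + pd j (pd i A) x * B x)"
    by (simp add: pd_mult diff)
  finally show ?thesis by simp
qed

lemma second_order_op_mult:
  assumes "twice_pd_differentiable A" "twice_pd_differentiable B"
    and "\<And>i j. a x i j = a x j i"
  shows "second_order_op a b (\<lambda>x. A x * B x) x =
    A x * second_order_op a b B x + B x * second_order_op a b A x + 2 * grad_form a A B x"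
proof -
  let ?a = "\<lambda>i j. complex_of_real (a x i j)"
  have "(\<Sum>i\<in>UNIV. \<Sum>j\<in>UNIV. ?a i j * pd j (pd i (\<lambda>x. A x * B x)) x)
     = (\<Sum>i\<in>UNIV. \<Sum>j\<in>UNIV. A x * (?a i j * pd j (pd i B) x) + B x * (?a i j * pd j (pd i A) x)
          + ?a i j * pd i B x * pd j A x + ?a i j * pd i A x * pd j B x)"
    by (intro sum.cong refl) (simp add: pd_pd_mult[OF assms(1,2)] algebra_simps)
  also have "\<dots> = A x * (\<Sum>i\<in>UNIV. \<Sum>j\<in>UNIV. ?a i j * pd j (pd i B) x)
     + B x * (\<Sum>i\<in>UNIV. \<Sum>j\<in>UNIV. ?a i j * pd j (pd i A) x) + grad_form a B A x + grad_form a A B x"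
    by (simp add: sum.distrib sum_distrib_left grad_form_def)
  finally have second: "(\<Sum>i\<in>UNIV. \<Sum>j\<in>UNIV. ?a i j * pd j (pd i (\<lambda>x. A x * B x)) x) =
     A x * (\<Sum>i\<in>UNIV. \<Sum>j\<in>UNIV. ?a i j * pd j (pd i B) x)
     + B x * (\<Sum>i\<in>UNIV. \<Sum>j\<in>UNIV. ?a i j * pd j (pd i A) x) + 2 * grad_form a A B x"
    using grad_form_sym[of a x B A, OF assms(3)] by simp
  have first: "(\<Sum>i\<in>UNIV. complex_of_real (b x i) * pd i (\<lambda>x. A x * B x) x)
     = A x * (\<Sum>i\<in>UNIV. complex_of_real (b x i) * pd i B x)
       + B x * (\<Sum>i\<in>UNIV. complex_of_real (b x i) * pd i A x)"
    by (simp add: pd_mult_fun[OF assms(1,2)] sum.distrib sum_distrib_left algebra_simps)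
  show ?thesis unfolding second_order_op_def second first by (simp add: algebra_simps)
qed

lemma second_order_op_comp_real:
  fixes T :: "real^'k::finite \<Rightarrow> real" and Q :: "real \<Rightarrow> complex"
  assumes "\<And>x. T differentiable (at x)" "twice_pd_differentiable (\<lambda>x. complex_of_real (T x))"
    and "\<And>x. (Q has_vector_derivative Q1 (T x)) (at (T x))"
    and "\<And>x. (Q1 has_vector_derivative Q2 (T x)) (at (T x))"
  shows "second_order_op a b (\<lambda>x. Q (T x)) x =
    Q2 (T x) * grad_form a (\<lambda>x. complex_of_real (T x)) (\<lambda>x. complex_of_real (T x)) x
    + Q1 (T x) * second_order_op a b (\<lambda>x. complex_of_real (T x)) x"
proof -
  let ?T = "\<lambda>x. complex_of_real (T x)"
  have "pd j (\<lambda>x. Q1 (T x) * pd i ?T x) x =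
      Q1 (T x) * pd j (pd i ?T) x + Q2 (T x) * pd j ?T x * pd i ?T x" for i j
    using pd_mult[OF differentiable_comp_real[OF assms(1,4)] twice_pd_differentiableD(2)[OF assms(2)]]
      pd_comp_real[OF assms(1,4)]
    by simp
  then show ?thesis
    unfolding second_order_op_def pd_comp_real_fun[OF assms(1,3)] grad_form_def
    by (simp add: algebra_simps sum.distrib sum_distrib_left)
qed

lemma sum_swap3:
  "(\<Sum>i\<in>A. \<Sum>j\<in>B. \<Sum>l\<in>C. f i j l) = (\<Sum>l\<in>C. \<Sum>i\<in>A. \<Sum>j\<in>B. f i j l)"
proof -
  have "(\<Sum>i\<in>A. \<Sum>j\<in>B. \<Sum>l\<in>C. f i j l) = (\<Sum>i\<in>A. \<Sum>l\<in>C. \<Sum>j\<in>B. f i j l)"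
    by (rule sum.cong[OF refl]) (rule sum.swap)
  also have "\<dots> = (\<Sum>l\<in>C. \<Sum>i\<in>A. \<Sum>j\<in>B. f i j l)" by (rule sum.swap)
  finally show ?thesis .
qed

lemma sum_swap3_factor:
  fixes c :: "'c \<Rightarrow> 'r::semiring_0"
  shows "(\<Sum>i\<in>A. \<Sum>j\<in>B. \<Sum>l\<in>C. c l * f i j l) = (\<Sum>l\<in>C. c l * (\<Sum>i\<in>A. \<Sum>j\<in>B. f i j l))"
  unfolding sum_distrib_left by (rule sum_swap3)

lemma sum_swap4_factor:
  fixes c :: "'c \<Rightarrow> 'd \<Rightarrow> 'r::semiring_0"
  shows "(\<Sum>i\<in>A. \<Sum>j\<in>B. \<Sum>l\<in>C. \<Sum>m\<in>D. c l m * f i j l m) =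
    (\<Sum>l\<in>C. \<Sum>m\<in>D. c l m * (\<Sum>i\<in>A. \<Sum>j\<in>B. f i j l m))"
proof -
  have "(\<Sum>i\<in>A. \<Sum>j\<in>B. \<Sum>l\<in>C. \<Sum>m\<in>D. c l m * f i j l m) =
      (\<Sum>l\<in>C. \<Sum>i\<in>A. \<Sum>j\<in>B. \<Sum>m\<in>D. c l m * f i j l m)"
    by (rule sum_swap3)
  also have "\<dots> = (\<Sum>l\<in>C. \<Sum>m\<in>D. \<Sum>i\<in>A. \<Sum>j\<in>B. c l m * f i j l m)"
    by (rule sum.cong[OF refl]) (rule sum_swap3)
  finally show ?thesis by (simp add: sum_distrib_left)
qed

lemma add_right_commute: "a + b + c = a + c + (b :: 'a::ab_semigroup_add)"
  by (simp add: ac_simps)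

lemma second_order_op_comp:
  fixes Z :: "real^'k::finite \<Rightarrow> real^'m::finite" and h :: "real^'m \<Rightarrow> complex"
  assumes "\<And>x. Z differentiable (at x)"
    and "\<And>l. twice_pd_differentiable (\<lambda>x. complex_of_real (Z x $ l))"
    and "twice_pd_differentiable h"
  shows "second_order_op a b (\<lambda>x. h (Z x)) x =
      (\<Sum>l\<in>UNIV. pd l h (Z x) * second_order_op a b (\<lambda>x. complex_of_real (Z x $ l)) x)
    + (\<Sum>l\<in>UNIV. \<Sum>m\<in>UNIV. pd m (pd l h) (Z x) *
         grad_form a (\<lambda>x. complex_of_real (Z x $ l)) (\<lambda>x. complex_of_real (Z x $ m)) x)"
proof -
  let ?Z = "\<lambda>l x. complex_of_real (Z x $ l)"
  let ?a = "\<lambda>i j. complex_of_real (a x i j)"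
  let ?b = "\<lambda>i. complex_of_real (b x i)"
  note hdiff = twice_pd_differentiableD[OF assms(3)]
  note Zdiff = twice_pd_differentiableD(2)[OF assms(2)]
  have pdhZ: "(\<lambda>x. pd l h (Z x)) differentiable (at x)" for l x
    using differentiable_chain_at[OF assms(1) hdiff(2)] by (simp add: o_def)
  have pd_pd: "pd j (\<lambda>x. \<Sum>l\<in>UNIV. pd l h (Z x) * pd i (?Z l) x) x =
     (\<Sum>l\<in>UNIV. pd l h (Z x) * pd j (pd i (?Z l)) x +
        (\<Sum>m\<in>UNIV. pd m (pd l h) (Z x) * pd j (?Z m) x) * pd i (?Z l) x)" for i j
  proof -
    have "pd j (\<lambda>x. \<Sum>l\<in>UNIV. pd l h (Z x) * pd i (?Z l) x) x =
       (\<Sum>l\<in>UNIV. pd j (\<lambda>x. pd l h (Z x) * pd i (?Z l) x) x)"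
      by (rule pd_sum) (auto intro!: differentiable_mult pdhZ Zdiff)
    also have "\<dots> = (\<Sum>l\<in>UNIV. pd l h (Z x) * pd j (pd i (?Z l)) x
        + pd j (\<lambda>x. pd l h (Z x)) x * pd i (?Z l) x)"
      by (rule sum.cong[OF refl], rule pd_mult[OF pdhZ Zdiff])
    finally show ?thesis using pd_comp[OF assms(1) hdiff(2)] by simp
  qed
  have expand_ij: "?a i j * (\<Sum>l\<in>UNIV. pd l h (Z x) * pd j (pd i (?Z l)) x +
        (\<Sum>m\<in>UNIV. pd m (pd l h) (Z x) * pd j (?Z m) x) * pd i (?Z l) x)
     = (\<Sum>l\<in>UNIV. pd l h (Z x) * (?a i j * pd j (pd i (?Z l)) x))
     + (\<Sum>l\<in>UNIV. \<Sum>m\<in>UNIV. pd m (pd l h) (Z x) * (?a i j * pd i (?Z l) x * pd j (?Z m) x))"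
    for i j
    by (simp add: sum_distrib_left sum_distrib_right sum.distrib distrib_left mult_ac)
  have expand_first_order: "(\<Sum>i\<in>UNIV. ?b i * (\<Sum>l\<in>UNIV. pd l h (Z x) * pd i (?Z l) x))
     = (\<Sum>l\<in>UNIV. pd l h (Z x) * (\<Sum>i\<in>UNIV. ?b i * pd i (?Z l) x))"
    by (simp add: sum_distrib_left mult_ac) (rule sum.swap)
  have "second_order_op a b (\<lambda>x. h (Z x)) x =
     (\<Sum>i\<in>UNIV. \<Sum>j\<in>UNIV. (\<Sum>l\<in>UNIV. pd l h (Z x) * (?a i j * pd j (pd i (?Z l)) x))
     + (\<Sum>l\<in>UNIV. \<Sum>m\<in>UNIV. pd m (pd l h) (Z x) * (?a i j * pd i (?Z l) x * pd j (?Z m) x)))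
     + (\<Sum>l\<in>UNIV. pd l h (Z x) * (\<Sum>i\<in>UNIV. ?b i * pd i (?Z l) x))"
    unfolding second_order_op_def[of a b "\<lambda>x. h (Z x)"] pd_comp_fun[OF assms(1) hdiff(1)]
      pd_pd expand_ij expand_first_order ..
  also have "\<dots> = (\<Sum>l\<in>UNIV. pd l h (Z x) * (\<Sum>i\<in>UNIV. \<Sum>j\<in>UNIV. ?a i j * pd j (pd i (?Z l)) x))
     + (\<Sum>l\<in>UNIV. \<Sum>m\<in>UNIV. pd m (pd l h) (Z x) *
          (\<Sum>i\<in>UNIV. \<Sum>j\<in>UNIV. ?a i j * pd i (?Z l) x * pd j (?Z m) x))
     + (\<Sum>l\<in>UNIV. pd l h (Z x) * (\<Sum>i\<in>UNIV. ?b i * pd i (?Z l) x))"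
    by (simp only: sum.distrib sum_swap3_factor sum_swap4_factor)
  also have "\<dots> = (\<Sum>l\<in>UNIV. pd l h (Z x) * second_order_op a b (?Z l) x)
     + (\<Sum>l\<in>UNIV. \<Sum>m\<in>UNIV. pd m (pd l h) (Z x) * grad_form a (?Z l) (?Z m) x)"
    unfolding second_order_op_def grad_form_def distrib_left sum.distrib
    by (rule add_right_commute)
  finally show ?thesis .
qed

subsection \<open>The hyperbolic Laplacian in the chart\<close>

definition chart_y0 :: "real^'k::finite \<Rightarrow> real" where
  "chart_y0 x = sqrt (1 + x \<bullet> x)"

definition hmetric_inv :: "real^'k::finite \<Rightarrow> 'k \<Rightarrow> 'k \<Rightarrow> real" where
  "hmetric_inv x i j = (if i = j then 1 else 0) + x $ i * x $ j"

abbreviation hlap :: "(real^'k::finite \<Rightarrow> complex) \<Rightarrow> real^'k \<Rightarrow> complex" where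
  "hlap \<equiv> second_order_op hmetric_inv (\<lambda>x i. real CARD('k) * x $ i)"

abbreviation hgrad :: "(real^'k::finite \<Rightarrow> complex) \<Rightarrow> (real^'k \<Rightarrow> complex) \<Rightarrow> real^'k \<Rightarrow> complex" where
  "hgrad \<equiv> grad_form hmetric_inv"

lemma inner_self_vec: "x \<bullet> x = (\<Sum>i\<in>UNIV. x $ i * x $ i)"
  for x :: "real^'k::finite"
  by (simp add: inner_vec_def)

lemma chart_y0_pos: "chart_y0 x > 0"
  by (simp add: chart_y0_def add_pos_nonneg)

lemma chart_y0_sq: "(chart_y0 x)\<^sup>2 = 1 + x \<bullet> x"
  by (simp add: chart_y0_def add_nonneg_nonneg)

lemma hchart_eq: "hchart = (\<lambda>x::real^'k::finite. (chart_y0 x, x))"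
  by (simp add: fun_eq_iff hchart_def chart_y0_def inner_self_vec power2_eq_square)

lemma hmetric_inv_sym: "hmetric_inv x i j = hmetric_inv x j i"
  by (simp add: hmetric_inv_def mult.commute)

lemma hgrad_eq:
  "hgrad F G x = (\<Sum>i\<in>UNIV. pd i F x * pd i G x)
   + (\<Sum>i\<in>UNIV. complex_of_real (x $ i) * pd i F x) * (\<Sum>j\<in>UNIV. complex_of_real (x $ j) * pd j G x)"
proof -
  have "hgrad F G x = (\<Sum>i\<in>UNIV. \<Sum>j\<in>UNIV. (if i = j then pd i F x * pd j G x else 0)
      + (complex_of_real (x $ i) * pd i F x) * (complex_of_real (x $ j) * pd j G x))"
    unfolding grad_form_def hmetric_inv_def by (intro sum.cong refl) (simp add: algebra_simps)
  then show ?thesis by (simp add: sum.distrib sum_product)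
qed

lemma hlap_eq:
  fixes x :: "real^'k::finite"
  shows "hlap F x = (\<Sum>i\<in>UNIV. pd i (pd i F) x)
   + (\<Sum>i\<in>UNIV. \<Sum>j\<in>UNIV. complex_of_real (x $ i * x $ j) * pd j (pd i F) x)
   + of_nat CARD('k) * (\<Sum>i\<in>UNIV. complex_of_real (x $ i) * pd i F x)"
proof -
  have "(\<Sum>i\<in>UNIV. \<Sum>j\<in>UNIV. complex_of_real (hmetric_inv x i j) * pd j (pd i F) x)
     = (\<Sum>i\<in>UNIV. \<Sum>j\<in>UNIV. (if i = j then pd j (pd i F) x else 0)
         + complex_of_real (x $ i * x $ j) * pd j (pd i F) x)"
    unfolding hmetric_inv_def by (intro sum.cong refl) (simp add: algebra_simps)
  then show ?thesis
    unfolding second_order_op_def by (simp add: sum.distrib sum_distrib_left mult.assoc)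
qed

lemma sum_axis: "(\<Sum>k\<in>UNIV. x $ k * axis j (1::real) $ k) = x $ j"
  by (simp add: axis_def if_distrib[of "\<lambda>t. _ * t"] cong: if_cong)

lemma has_derivative_vec_nth: "((\<lambda>x::real^'k::finite. x $ a) has_derivative (\<lambda>v. v $ a)) (at x)"
  by (rule bounded_linear_imp_has_derivative) (rule bounded_linear_vec_nth)

lemma pd_coord [simp]:
  "pd i (\<lambda>x::real^'k::finite. complex_of_real (x $ a)) = (\<lambda>x. if i = a then 1 else 0)"
  by (simp add: fun_eq_iff pd_of_real[OF has_derivative_vec_nth] axis_def)

lemma twice_pd_differentiable_coord:
  "twice_pd_differentiable (\<lambda>x::real^'k::finite. complex_of_real (x $ a))"
  unfolding twice_pd_differentiable_def
  using differentiable_of_real[OF has_derivative_vec_nth] by auto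

lemma has_derivative_chart_y0:
  fixes x :: "real^'k::finite"
  shows "(chart_y0 has_derivative (\<lambda>v. (\<Sum>i\<in>UNIV. x $ i * v $ i) / chart_y0 x)) (at x)"
proof -
  have pos: "1 + x \<bullet> x > 0" by (simp add: add_pos_nonneg)
  have "((\<lambda>x::real^'k. sqrt (1 + x \<bullet> x)) has_derivative
      (\<lambda>v. inverse (sqrt (1 + x \<bullet> x)) / 2 * (v \<bullet> x + x \<bullet> v))) (at x)"
    using pos by (auto intro!: derivative_eq_intros)
  moreover have "inverse (sqrt (1 + x \<bullet> x)) / 2 * (v \<bullet> x + x \<bullet> v) =
      (\<Sum>i\<in>UNIV. x $ i * v $ i) / chart_y0 x" for v
    by (simp add: inner_commute[of v x] inner_vec_def chart_y0_def field_simps)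
  ultimately show ?thesis by (simp add: chart_y0_def[abs_def])
qed

lemma pd_chart_y0 [simp]:
  "pd i (\<lambda>x::real^'k::finite. complex_of_real (chart_y0 x)) =
    (\<lambda>x. complex_of_real (x $ i / chart_y0 x))"
  by (simp add: fun_eq_iff pd_of_real[OF has_derivative_chart_y0] sum_axis)

lemma has_derivative_coord_div_chart_y0:
  fixes x :: "real^'k::finite"
  shows "((\<lambda>x. x $ i / chart_y0 x) has_derivative (\<lambda>v. v $ i / chart_y0 x
      - x $ i * (inverse (chart_y0 x) * (\<Sum>k\<in>UNIV. x $ k * v $ k) * inverse (chart_y0 x)) / chart_y0 x))
    (at x)"
proof -
  have "((\<lambda>x::real^'k. x $ i) has_derivative (\<lambda>v. v $ i)) (at x)"
    by (rule has_derivative_vec_nth)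
  from has_derivative_divide[OF this has_derivative_chart_y0] show ?thesis
    using chart_y0_pos[of x] by simp
qed

lemma pd_pd_chart_y0:
  "pd j (pd i (\<lambda>x::real^'k::finite. complex_of_real (chart_y0 x))) x =
   complex_of_real ((if i = j then 1 else 0) / chart_y0 x - x $ i * x $ j / (chart_y0 x)^3)"
proof -
  have "pd j (pd i (\<lambda>x::real^'k. complex_of_real (chart_y0 x))) x =
      pd j (\<lambda>x. complex_of_real (x $ i / chart_y0 x)) x"
    by (simp only: pd_chart_y0)
  also have "\<dots> = complex_of_real (axis j 1 $ i / chart_y0 x - x $ i * (inverse (chart_y0 x) *
      (\<Sum>k\<in>UNIV. x $ k * axis j 1 $ k) * inverse (chart_y0 x)) / chart_y0 x)"
    by (rule pd_of_real[OF has_derivative_coord_div_chart_y0])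
  also have "\<dots> = complex_of_real ((if i = j then 1 else 0) / chart_y0 x - x $ i * x $ j / (chart_y0 x)^3)"
    using chart_y0_pos[of x]
    by (intro arg_cong[where f = complex_of_real]) (simp add: sum_axis, simp add: axis_def field_simps power3_eq_cube)
  finally show ?thesis .
qed

lemma twice_pd_differentiable_chart_y0:
  "twice_pd_differentiable (\<lambda>x::real^'k::finite. complex_of_real (chart_y0 x))"
  unfolding twice_pd_differentiable_def pd_chart_y0
  using differentiable_of_real has_derivative_chart_y0 has_derivative_coord_div_chart_y0 by blast

lemma chart_y0_differentiable: "chart_y0 differentiable (at x)"
  using has_derivative_chart_y0 differentiable_def by blast

lemma hgrad_coord_coord:
  "hgrad (\<lambda>x::real^'k::finite. complex_of_real (x $ a)) (\<lambda>x. complex_of_real (x $ b)) x =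
    complex_of_real (hmetric_inv x a b)"
  by (simp add: grad_form_def if_distrib[of "\<lambda>t. _ * t"] cong: if_cong)

lemma hlap_coord:
  "hlap (\<lambda>x::real^'k::finite. complex_of_real (x $ a)) x = of_nat CARD('k) * complex_of_real (x $ a)"
  by (simp add: second_order_op_def if_distrib[of "\<lambda>t. _ * t"] cong: if_cong)

lemma hgrad_chart_y0_coord:
  "hgrad (\<lambda>x::real^'k::finite. complex_of_real (chart_y0 x)) (\<lambda>x. complex_of_real (x $ a)) x =
    complex_of_real (x $ a * chart_y0 x)"
proof -
  have "hgrad (\<lambda>x::real^'k. complex_of_real (chart_y0 x)) (\<lambda>x. complex_of_real (x $ a)) x =
      complex_of_real (x $ a / chart_y0 x + (x \<bullet> x / chart_y0 x) * x $ a)"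
    unfolding hgrad_eq
    by (simp add: if_distrib inner_self_vec sum_divide_distrib cong: if_cong)
  also have "x $ a / chart_y0 x + (x \<bullet> x / chart_y0 x) * x $ a = x $ a * (1 + x \<bullet> x) / chart_y0 x"
    by (simp add: algebra_simps add_divide_distrib)
  also have "\<dots> = x $ a * chart_y0 x"
    unfolding chart_y0_sq[symmetric] using chart_y0_pos[of x] by (simp add: power2_eq_square)
  finally show ?thesis .
qed

lemma hgrad_chart_y0_chart_y0:
  "hgrad (\<lambda>x::real^'k::finite. complex_of_real (chart_y0 x)) (\<lambda>x. complex_of_real (chart_y0 x)) x =
    complex_of_real (x \<bullet> x)"
proof -
  have "hgrad (\<lambda>x::real^'k. complex_of_real (chart_y0 x)) (\<lambda>x. complex_of_real (chart_y0 x)) x =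
      complex_of_real (x \<bullet> x / (chart_y0 x)^2 + (x \<bullet> x / chart_y0 x) * (x \<bullet> x / chart_y0 x))"
    unfolding hgrad_eq by (simp add: inner_self_vec power2_eq_square sum_divide_distrib)
  also have "x \<bullet> x / (chart_y0 x)^2 + (x \<bullet> x / chart_y0 x) * (x \<bullet> x / chart_y0 x) =
      x \<bullet> x * (1 + x \<bullet> x) / (chart_y0 x)^2"
    by (simp add: algebra_simps add_divide_distrib power2_eq_square)
  also have "\<dots> = x \<bullet> x"
    unfolding chart_y0_sq[symmetric] using chart_y0_pos[of x] by simp
  finally show ?thesis .
qed

lemma hlap_chart_y0:
  "hlap (\<lambda>x::real^'k::finite. complex_of_real (chart_y0 x)) x =
    of_nat CARD('k) * complex_of_real (chart_y0 x)"
proof -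
  let ?n = "real CARD('k)" and ?r = "chart_y0 x" and ?S = "x \<bullet> x"
  have diag: "(\<Sum>i\<in>UNIV. (if i = i then 1 else 0) / ?r - x $ i * x $ i / ?r^3) = ?n / ?r - ?S / ?r^3"
    by (simp add: sum_subtractf sum_divide_distrib[symmetric] inner_self_vec)
  have mixed: "(\<Sum>i\<in>UNIV. \<Sum>j\<in>UNIV. (x $ i * x $ j) * ((if i = j then 1 else 0) / ?r - x $ i * x $ j / ?r^3))
      = ?S / ?r - ?S * ?S / ?r^3"
  proof -
    have "(\<Sum>j\<in>UNIV. (x $ i * x $ j) * ((if i = j then 1 else 0) / ?r - x $ i * x $ j / ?r^3))
       = x $ i * x $ i / ?r - (\<Sum>j\<in>UNIV. (x $ i * x $ i) * (x $ j * x $ j) / ?r^3)" for i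
    proof -
      have "(\<Sum>j\<in>UNIV. (x $ i * x $ j) * ((if i = j then 1 else 0) / ?r - x $ i * x $ j / ?r^3))
         = (\<Sum>j\<in>UNIV. (if j = i then x $ i * x $ i / ?r else 0) - (x $ i * x $ i) * (x $ j * x $ j) / ?r^3)"
        by (rule sum.cong) (auto simp: algebra_simps)
      then show ?thesis by (simp add: sum_subtractf)
    qed
    then show ?thesis
      by (simp add: sum_subtractf inner_self_vec sum_divide_distrib[symmetric] sum_product)
  qed
  have radial: "(\<Sum>i\<in>UNIV. x $ i * (x $ i / ?r)) = ?S / ?r"
    by (simp add: inner_self_vec sum_divide_distrib[symmetric])
  have "(?n / ?r - ?S / ?r^3) + (?S / ?r - ?S * ?S / ?r^3) + ?n * (?S / ?r)
      = ?n * (1 + ?S) / ?r + ?S / ?r - ?S * (1 + ?S) / ?r^3"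
    by (simp add: algebra_simps add_divide_distrib diff_divide_distrib)
  also have "\<dots> = ?n * ?r"
    unfolding chart_y0_sq[symmetric] using chart_y0_pos[of x]
    by (simp add: power2_eq_square power3_eq_cube)
  finally have total: "(?n / ?r - ?S / ?r^3) + (?S / ?r - ?S * ?S / ?r^3) + ?n * (?S / ?r) = ?n * ?r" .
  have "hlap (\<lambda>x. complex_of_real (chart_y0 x)) x = complex_of_real (
      (\<Sum>i\<in>UNIV. (if i = i then 1 else 0) / ?r - x $ i * x $ i / ?r^3)
    + (\<Sum>i\<in>UNIV. \<Sum>j\<in>UNIV. (x $ i * x $ j) * ((if i = j then 1 else 0) / ?r - x $ i * x $ j / ?r^3))
    + ?n * (\<Sum>i\<in>UNIV. x $ i * (x $ i / ?r)))"
    unfolding hlap_eq pd_pd_chart_y0 unfolding pd_chart_y0 by simp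
  then show ?thesis unfolding diag mixed radial total by simp
qed

subsection \<open>The induced metric in the chart\<close>

lemma pdv_hchart: "pdv i hchart x = (x $ i / chart_y0 x, axis i 1)"
  for x :: "real^'k::finite"
proof -
  have "(hchart has_derivative (\<lambda>v. ((\<Sum>i\<in>UNIV. x $ i * v $ i) / chart_y0 x, v))) (at x)"
    unfolding hchart_eq by (rule has_derivative_Pair[OF has_derivative_chart_y0 has_derivative_ident])
  from pdv_has_derivative[OF this] show ?thesis by (simp add: sum_axis)
qed

lemma hmetric_chart:
  "hmetric x = (\<chi> i j. (if i = j then 1 else 0) - x $ i * x $ j / (chart_y0 x)\<^sup>2)"
proof -
  have "(\<Sum>k\<in>UNIV. axis i (1::real) $ k * axis j 1 $ k) = (if i = j then 1 else 0)" for i j :: 'a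
    using sum_axis[of "axis i 1" j] by (simp add: axis_def)
  then show ?thesis
    unfolding hmetric_def pdv_hchart mink_def by (simp add: vec_eq_iff power2_eq_square)
qed

lemma hmetric_mult_inv: "hmetric x ** (\<chi> i j. hmetric_inv x i j) = mat 1"
proof -
  let ?r = "chart_y0 x" and ?S = "x \<bullet> x"
  have "(hmetric x ** (\<chi> i j. hmetric_inv x i j)) $ i $ j = (if i = j then 1 else 0)" for i j
  proof -
    have "(hmetric x ** (\<chi> i j. hmetric_inv x i j)) $ i $ j = (\<Sum>k\<in>UNIV.
        ((if i = k then 1 else 0) - x $ i * x $ k / ?r^2) * ((if k = j then 1 else 0) + x $ k * x $ j))"
      by (simp add: hmetric_chart hmetric_inv_def matrix_matrix_mult_def)
    also have "\<dots> = (\<Sum>k\<in>UNIV. (if k = i then (if i = j then 1 else 0) + x $ i * x $ j else 0)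
       - (if k = j then x $ i * x $ j / ?r^2 else 0) - x $ i * x $ j / ?r^2 * (x $ k * x $ k))"
      by (rule sum.cong[OF refl]) (auto simp: algebra_simps add_divide_distrib)
    also have "\<dots> = (if i = j then 1 else 0) + x $ i * x $ j - x $ i * x $ j / ?r^2
        - x $ i * x $ j / ?r^2 * ?S"
      by (simp add: sum_subtractf sum_distrib_left[symmetric] inner_self_vec del: times_divide_eq_left)
    also have "\<dots> = (if i = j then 1 else 0) + x $ i * x $ j - x $ i * x $ j * (1 + ?S) / ?r^2"
      by (simp add: algebra_simps add_divide_distrib)
    also have "\<dots> = (if i = j then 1 else 0)"
      unfolding chart_y0_sq[symmetric] using chart_y0_pos[of x] by simp
    finally show ?thesis .
  qed
  then show ?thesis by (simp add: vec_eq_iff mat_def)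
qed

lemma matrix_inv_unique:
  fixes A B :: "real^'n::finite^'n"
  assumes "A ** B = mat 1" "B ** A = mat 1"
  shows "matrix_inv A = B"
  unfolding matrix_inv_def
proof (rule someI2[of _ B])
  show "A ** B = mat 1 \<and> B ** A = mat 1" using assms by simp
next
  fix A' assume "A ** A' = mat 1 \<and> A' ** A = mat 1"
  then have "A' = A' ** (A ** B)" "A' ** A = mat 1" using assms by auto
  then show "A' = B" by (metis matrix_mul_assoc matrix_mul_lid)
qed

lemma matrix_inv_hmetric: "matrix_inv (hmetric x) = (\<chi> i j. hmetric_inv x i j)"
  using matrix_inv_unique hmetric_mult_inv matrix_left_right_inverse1 by blast

lemma orthogonal_conj_id_plus_outer:
  fixes A :: "real^'n::finite^'n" and x :: "real^'n"
  assumes "transpose A ** A = mat 1"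
  shows "transpose A ** (\<chi> i j. (if i = j then 1 else 0) + x $ i * x $ j) ** A =
    (\<chi> i j. (if i = j then 1 else 0) + (transpose A *v x) $ i * (transpose A *v x) $ j)"
proof -
  have orth: "(\<Sum>k\<in>UNIV. A $ k $ i * A $ k $ j) = (if i = j then 1 else 0)" for i j
    using arg_cong[OF assms, of "\<lambda>M. M $ i $ j"]
    by (simp add: matrix_matrix_mult_def transpose_def mat_def)
  have inner: "(\<Sum>k\<in>UNIV. A $ k $ i * ((if k = l then 1 else 0) + x $ k * x $ l)) =
      A $ l $ i + (\<Sum>k\<in>UNIV. A $ k $ i * x $ k) * x $ l" for i l
    by (simp add: algebra_simps sum.distrib sum_distrib_right sum_distrib_left
        if_distrib[of "\<lambda>t. A $ _ $ i * t"] cong: if_cong)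
  have "(\<Sum>l\<in>UNIV. (A $ l $ i + (\<Sum>k\<in>UNIV. A $ k $ i * x $ k) * x $ l) * A $ l $ j) =
      (if i = j then 1 else 0) + (transpose A *v x) $ i * (transpose A *v x) $ j" for i j
    by (simp add: algebra_simps sum.distrib sum_distrib_left orth
        matrix_vector_mult_def transpose_def)
  then show ?thesis
    by (simp add: vec_eq_iff matrix_matrix_mult_def transpose_def inner)
qed

lemma det_id_plus_outer:
  fixes x :: "real^'n::finite"
  shows "det (\<chi> i j. (if i = j then 1 else 0) + x $ i * x $ j) = 1 + x \<bullet> x"
proof (cases "x = 0")
  case True
  then have "(\<chi> i j. (if i = j then 1 else 0) + x $ i * x $ j) = (mat 1 :: real^'n^'n)"
    by (simp add: mat_def vec_eq_iff)
  then show ?thesis using True by simp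
next
  case False
  obtain k :: 'n where True by simp
  obtain A where orth: "orthogonal_matrix A" and Ak: "A *v axis k 1 = x /\<^sub>R norm x"
    using orthogonal_matrix_exists_basis[of "x /\<^sub>R norm x"] False by auto
  have tAA: "transpose A ** A = mat 1"
    using orth unfolding orthogonal_matrix_def by auto
  \<comment> \<open>In a basis whose k-th vector is x / |x|, the matrix becomes diagonal.\<close>
  have "transpose A *v x = norm x *\<^sub>R (transpose A *v (x /\<^sub>R norm x))"
    using False by (simp add: matrix_vector_mult_scaleR)
  also have "\<dots> = norm x *\<^sub>R axis k 1"
    using Ak tAA by (metis matrix_vector_mul_assoc matrix_vector_mul_lid)
  finally have w: "transpose A *v x = norm x *\<^sub>R axis k 1" .
  let ?D = "\<chi> i j. (if i = j then 1 else 0) + (norm x *\<^sub>R axis k 1) $ i * (norm x *\<^sub>R axis k 1) $ j"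
  have "det (transpose A ** (\<chi> i j. (if i = j then 1 else 0) + x $ i * x $ j) ** A) =
      (\<Prod>i\<in>UNIV. ?D $ i $ i)"
    unfolding orthogonal_conj_id_plus_outer[OF tAA] w by (rule det_diagonal) (auto simp: axis_def)
  also have "\<dots> = (\<Prod>i\<in>UNIV. if i = k then 1 + (norm x)\<^sup>2 else 1)"
    by (intro prod.cong refl) (simp add: axis_def power2_eq_square)
  finally have "det (transpose A ** (\<chi> i j. (if i = j then 1 else 0) + x $ i * x $ j) ** A) =
      1 + x \<bullet> x"
    by (simp add: power2_norm_eq_inner)
  moreover have "det A * det A = 1"
    using arg_cong[OF tAA, of det] by (simp add: det_mul)
  moreover have "det (transpose A ** (\<chi> i j. (if i = j then 1 else 0) + x $ i * x $ j) ** A) =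
      det (\<chi> i j. (if i = j then 1 else 0) + x $ i * x $ j) * (det A * det A)"
    by (simp add: det_mul det_transpose ac_simps)
  ultimately show ?thesis by simp
qed

lemma det_hmetric: "det (hmetric x) = 1 / (chart_y0 x)\<^sup>2"
proof -
  have "det (hmetric x) * det (\<chi> i j. hmetric_inv x i j) = 1"
    using arg_cong[OF hmetric_mult_inv[of x], of det] by (simp add: det_mul)
  moreover have "det (\<chi> i j. hmetric_inv x i j) = (chart_y0 x)\<^sup>2"
    unfolding hmetric_inv_def det_id_plus_outer chart_y0_sq ..
  ultimately show ?thesis using chart_y0_pos[of x] by (simp add: field_simps)
qed

lemma sqrt_det_hmetric: "sqrt \<bar>det (hmetric x)\<bar> = 1 / chart_y0 x"
  unfolding det_hmetric using chart_y0_pos[of x] by (simp add: real_sqrt_divide)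

lemma has_derivative_hmetric_inv_div_chart_y0:
  fixes z :: "real^'k::finite"
  shows "((\<lambda>z. hmetric_inv z i j / chart_y0 z) has_derivative
     (\<lambda>v. ((z $ i * v $ j + v $ i * z $ j) * chart_y0 z
        - hmetric_inv z i j * (\<Sum>k\<in>UNIV. z $ k * v $ k) / chart_y0 z) / (chart_y0 z * chart_y0 z)))
    (at z)"
proof -
  have "((\<lambda>z. hmetric_inv z i j) has_derivative (\<lambda>v. z $ i * v $ j + v $ i * z $ j)) (at z)"
    unfolding hmetric_inv_def[abs_def]
    by (auto intro!: derivative_eq_intros has_derivative_vec_nth)
  from has_derivative_divide'[OF this has_derivative_chart_y0] show ?thesis
    using chart_y0_pos[of z] by simp
qed

lemma divergence_hmetric_inv:
  fixes x :: "real^'k::finite"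
  shows "(\<Sum>j\<in>UNIV. chart_y0 x * (((x $ i * axis j 1 $ j + axis j 1 $ i * x $ j) * chart_y0 x
      - hmetric_inv x i j * (x $ j / chart_y0 x)) / (chart_y0 x * chart_y0 x)))
    = real CARD('k) * x $ i"
proof -
  let ?r = "chart_y0 x" and ?S = "x \<bullet> x"
  have "(\<Sum>j\<in>UNIV. ?r * (((x $ i * axis j 1 $ j + axis j 1 $ i * x $ j) * ?r
        - hmetric_inv x i j * (x $ j / ?r)) / (?r * ?r)))
     = (\<Sum>j\<in>UNIV. x $ i + (if j = i then x $ i else 0) - (if j = i then x $ i else 0) / ?r^2
         - x $ i * (x $ j * x $ j) / ?r^2)"
    using chart_y0_pos[of x]
    by (intro sum.cong refl) (auto simp: axis_def hmetric_inv_def field_simps power2_eq_square)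
  also have "\<dots> = real CARD('k) * x $ i + x $ i - (x $ i + x $ i * ?S) / ?r^2"
  proof -
    have "(\<Sum>j\<in>UNIV. x $ i * (x $ j * x $ j) / ?r^2) = x $ i * ?S / ?r^2"
      by (simp add: sum_divide_distrib[symmetric] sum_distrib_left[symmetric] inner_self_vec)
    moreover have "(\<Sum>j\<in>UNIV. (if j = i then x $ i else 0) / ?r^2) = x $ i / ?r^2"
      by (simp add: sum_divide_distrib[symmetric])
    ultimately show ?thesis
      by (simp add: sum_subtractf sum.distrib add_divide_distrib)
  qed
  also have "\<dots> = real CARD('k) * x $ i"
  proof -
    have "x $ i + x $ i * ?S = x $ i * ?r^2" using chart_y0_sq[of x] by (simp add: algebra_simps)
    then show ?thesis using chart_y0_pos[of x] by simp
  qed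
  finally show ?thesis .
qed

lemma lb_coord_hmetric:
  fixes F :: "real^'k::finite \<Rightarrow> complex"
  assumes pdF: "\<And>i. pd i F differentiable (at x)"
  shows "lb_coord hmetric F x = hlap F x"
proof -
  let ?r = "chart_y0 x"
  let ?c = "\<lambda>i j z. complex_of_real (hmetric_inv z i j / chart_y0 z)"
  define d where "d i j = ((x $ i * axis j 1 $ j + axis j 1 $ i * x $ j) * ?r
      - hmetric_inv x i j * (\<Sum>k\<in>UNIV. x $ k * axis j 1 $ k) / ?r) / (?r * ?r)" for i j
  have coeff: "(\<lambda>z. complex_of_real (matrix_inv (hmetric z) $ i $ j * sqrt \<bar>det (hmetric z)\<bar>) * pd i F z)
      = (\<lambda>z. ?c i j z * pd i F z)" for i j
    by (simp add: matrix_inv_hmetric sqrt_det_hmetric)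
  have c_diff: "?c i j differentiable (at x)" for i j
    by (rule differentiable_of_real[OF has_derivative_hmetric_inv_div_chart_y0])
  have pd_c: "pd j (?c i j) x = complex_of_real (d i j)" for i j
    unfolding d_def by (rule pd_of_real[OF has_derivative_hmetric_inv_div_chart_y0])
  have "pd j (\<lambda>z. ?c i j z * pd i F z) x = ?c i j x * pd j (pd i F) x + complex_of_real (d i j) * pd i F x"
    for i j
    unfolding pd_mult[OF c_diff pdF] pd_c ..
  then have summand: "complex_of_real (1 / sqrt \<bar>det (hmetric x)\<bar>) * pd j (\<lambda>z. ?c i j z * pd i F z) x
     = complex_of_real (hmetric_inv x i j) * pd j (pd i F) x + complex_of_real (?r * d i j) * pd i F x"
    for i j
    using chart_y0_pos[of x] by (simp add: sqrt_det_hmetric algebra_simps)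
  have drift: "(\<Sum>j\<in>UNIV. complex_of_real (?r * d i j)) = complex_of_real (real CARD('k) * x $ i)"
    for i
  proof -
    have "(\<Sum>j\<in>UNIV. ?r * d i j) = real CARD('k) * x $ i"
      unfolding d_def sum_axis using divergence_hmetric_inv[of x i] by (simp add: field_simps)
    then show ?thesis by (simp only: of_real_sum[symmetric])
  qed
  have "lb_coord hmetric F x = (\<Sum>i\<in>UNIV. \<Sum>j\<in>UNIV.
     complex_of_real (hmetric_inv x i j) * pd j (pd i F) x + complex_of_real (?r * d i j) * pd i F x)"
    unfolding lb_coord_def coeff summand ..
  also have "\<dots> = (\<Sum>i\<in>UNIV. \<Sum>j\<in>UNIV. complex_of_real (hmetric_inv x i j) * pd j (pd i F) x)
      + (\<Sum>i\<in>UNIV. (\<Sum>j\<in>UNIV. complex_of_real (?r * d i j)) * pd i F x)"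
    by (simp only: sum.distrib sum_distrib_right)
  also have "\<dots> = hlap F x"
    unfolding drift second_order_op_def ..
  finally show ?thesis .
qed

subsection \<open>Upper half-space coordinates\<close>

definition horo :: "'k \<Rightarrow> real^'k::finite \<Rightarrow> real" where
  "horo N x = chart_y0 x + x $ N"

definition uhs_height :: "'k \<Rightarrow> real^'k::finite \<Rightarrow> real" where
  "uhs_height N x = 2 / horo N x"

lemma horo_pos: "horo N x > 0"
proof -
  have "(x $ N)\<^sup>2 \<le> x \<bullet> x"
    unfolding inner_self_vec power2_eq_square by (rule member_le_sum) auto
  then have "\<bar>x $ N\<bar> < chart_y0 x"
    unfolding chart_y0_def by (intro real_less_rsqrt) simp
  then show ?thesis unfolding horo_def by linarith
qed

lemma horo_neq_0 [simp]: "horo N x \<noteq> 0"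
  using horo_pos[of N x] by simp

lemma uhs_height_pos: "uhs_height N x > 0"
  using horo_pos[of N x] by (simp add: uhs_height_def)

lemma horo_differentiable: "horo N differentiable (at x)"
  for x :: "real^'k::finite"
proof -
  have "(\<lambda>x::real^'k. x $ N) differentiable (at x)"
    using has_derivative_vec_nth differentiable_def by blast
  then show ?thesis
    unfolding horo_def[abs_def] using chart_y0_differentiable by (rule differentiable_add[rotated])
qed

lemma twice_pd_differentiable_horo:
  "twice_pd_differentiable (\<lambda>x. complex_of_real (horo N x))"
  unfolding horo_def of_real_add
  by (rule twice_pd_differentiable_add[OF twice_pd_differentiable_chart_y0 twice_pd_differentiable_coord])

lemma hgrad_horo_horo: "hgrad (\<lambda>x. complex_of_real (horo N x)) (\<lambda>x. complex_of_real (horo N x)) x =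
    complex_of_real ((horo N x)\<^sup>2)"
proof -
  note diff = twice_pd_differentiableD(1)[OF twice_pd_differentiable_chart_y0]
    twice_pd_differentiableD(1)[OF twice_pd_differentiable_coord]
  have "hgrad (\<lambda>x. complex_of_real (horo N x)) (\<lambda>x. complex_of_real (horo N x)) x =
      complex_of_real (x \<bullet> x + x $ N * chart_y0 x + x $ N * chart_y0 x + hmetric_inv x N N)"
    unfolding horo_def of_real_add
    by (simp add: grad_form_add_left[OF diff] grad_form_add_right[OF diff]
        hgrad_chart_y0_chart_y0 hgrad_chart_y0_coord hgrad_coord_coord
        grad_form_sym[OF hmetric_inv_sym, where F="\<lambda>x. complex_of_real (x $ N)"
          and G="\<lambda>x. complex_of_real (chart_y0 x)"])
  also have "x \<bullet> x + x $ N * chart_y0 x + x $ N * chart_y0 x + hmetric_inv x N N = (horo N x)\<^sup>2"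
    using chart_y0_sq[of x] by (simp add: hmetric_inv_def horo_def power2_eq_square algebra_simps)
  finally show ?thesis .
qed

lemma hgrad_horo_coord:
  assumes "a \<noteq> N"
  shows "hgrad (\<lambda>x. complex_of_real (horo N x)) (\<lambda>x. complex_of_real (x $ a)) x =
    complex_of_real (x $ a * horo N x)"
  using assms
  unfolding horo_def of_real_add
  by (simp add: grad_form_add_left[OF twice_pd_differentiableD(1)[OF twice_pd_differentiable_chart_y0]
      twice_pd_differentiableD(1)[OF twice_pd_differentiable_coord]]
      hgrad_chart_y0_coord hgrad_coord_coord hmetric_inv_def algebra_simps)

lemma hlap_horo:
  "hlap (\<lambda>x. complex_of_real (horo N x)) x = of_nat CARD('k) * complex_of_real (horo N x)"
  for x :: "real^'k::finite"
  unfolding horo_def of_real_add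
  by (simp add: second_order_op_add[OF twice_pd_differentiable_chart_y0 twice_pd_differentiable_coord]
      hlap_chart_y0 hlap_coord distrib_left)

lemma has_vector_derivative_two_div:
  "s \<noteq> 0 \<Longrightarrow> ((\<lambda>s. complex_of_real (2 / s)) has_vector_derivative complex_of_real (- 2 / s\<^sup>2)) (at s)"
  by (rule has_vector_derivative_of_real)
    (auto intro!: derivative_eq_intros simp: power2_eq_square field_simps)

lemma has_vector_derivative_minus_two_div_sq:
  "s \<noteq> 0 \<Longrightarrow>
    ((\<lambda>s. complex_of_real (- 2 / s\<^sup>2)) has_vector_derivative complex_of_real (4 / s ^ 3)) (at s)"
  by (rule has_vector_derivative_of_real)
    (auto intro!: derivative_eq_intros simp: power2_eq_square power3_eq_cube field_simps)

lemma uhs_height_as_comp: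
  "(\<lambda>x. complex_of_real (uhs_height N x)) = (\<lambda>x. complex_of_real (2 / horo N x))"
  by (simp add: uhs_height_def)

lemma twice_pd_differentiable_uhs_height:
  "twice_pd_differentiable (\<lambda>x. complex_of_real (uhs_height N x))"
  unfolding uhs_height_as_comp
  by (intro twice_pd_differentiable_comp_real[OF horo_differentiable twice_pd_differentiable_horo
        has_vector_derivative_two_div has_vector_derivative_minus_two_div_sq]) simp_all

lemma uhs_height_differentiable: "uhs_height N differentiable (at x)"
  unfolding uhs_height_def[abs_def] using horo_differentiable
  by (auto intro!: differentiable_divide)

lemma hgrad_uhs_height_left:
  "hgrad (\<lambda>x. complex_of_real (uhs_height N x)) G x =
    complex_of_real (- 2 / (horo N x)\<^sup>2) * hgrad (\<lambda>x. complex_of_real (horo N x)) G x"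
  unfolding uhs_height_as_comp
  by (intro grad_form_comp_real horo_differentiable has_vector_derivative_two_div) simp

lemma hgrad_uhs_height_uhs_height:
  "hgrad (\<lambda>x. complex_of_real (uhs_height N x)) (\<lambda>x. complex_of_real (uhs_height N x)) x =
    complex_of_real ((uhs_height N x)\<^sup>2)"
proof -
  let ?T = "\<lambda>x. complex_of_real (uhs_height N x)" and ?U = "\<lambda>x. complex_of_real (horo N x)"
  let ?c = "complex_of_real (- 2 / (horo N x)\<^sup>2)"
  have "hgrad ?T ?T x = ?c * hgrad ?U ?T x" by (rule hgrad_uhs_height_left)
  also have "hgrad ?U ?T x = hgrad ?T ?U x" by (rule grad_form_sym[OF hmetric_inv_sym])
  also have "hgrad ?T ?U x = ?c * complex_of_real ((horo N x)\<^sup>2)"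
    by (simp only: hgrad_uhs_height_left hgrad_horo_horo)
  also have "?c * (?c * complex_of_real ((horo N x)\<^sup>2)) = complex_of_real ((uhs_height N x)\<^sup>2)"
    unfolding of_real_mult[symmetric]
    by (intro arg_cong[where f = complex_of_real]) (simp add: uhs_height_def field_simps power2_eq_square)
  finally show ?thesis .
qed

lemma hgrad_uhs_height_coord:
  assumes "a \<noteq> N"
  shows "hgrad (\<lambda>x. complex_of_real (uhs_height N x)) (\<lambda>x. complex_of_real (x $ a)) x =
    complex_of_real (- (x $ a * uhs_height N x))"
  unfolding hgrad_uhs_height_left hgrad_horo_coord[OF assms] of_real_mult[symmetric]
  by (intro arg_cong[where f = complex_of_real]) (simp add: uhs_height_def field_simps power2_eq_square)

lemma hlap_uhs_height:
  "hlap (\<lambda>x. complex_of_real (uhs_height N x)) x = complex_of_real ((2 - real CARD('k)) * uhs_height N x)"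
  for x :: "real^'k::finite"
proof -
  have "hlap (\<lambda>x. complex_of_real (uhs_height N x)) x =
      complex_of_real (4 / (horo N x)^3) * complex_of_real ((horo N x)\<^sup>2)
      + complex_of_real (- 2 / (horo N x)\<^sup>2) * (of_nat CARD('k) * complex_of_real (horo N x))"
    unfolding uhs_height_as_comp
      second_order_op_comp_real[OF horo_differentiable twice_pd_differentiable_horo
        has_vector_derivative_two_div[OF horo_neq_0] has_vector_derivative_minus_two_div_sq[OF horo_neq_0]]
      hgrad_horo_horo hlap_horo ..
  also have "\<dots> = complex_of_real (4 / (horo N x)^3 * (horo N x)\<^sup>2
      + - 2 / (horo N x)\<^sup>2 * (real CARD('k) * horo N x))"
    by simp
  also have "4 / (horo N x)^3 * (horo N x)\<^sup>2 + - 2 / (horo N x)\<^sup>2 * (real CARD('k) * horo N x) =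
      (2 - real CARD('k)) * uhs_height N x"
    using horo_pos[of N x] by (simp add: uhs_height_def field_simps power2_eq_square power3_eq_cube)
  finally show ?thesis .
qed

lemma uhs_coord_as_mult:
  "(\<lambda>x. complex_of_real (uhs_height N x * x $ a)) =
    (\<lambda>x. complex_of_real (uhs_height N x) * complex_of_real (x $ a))"
  by simp

lemma twice_pd_differentiable_uhs_coord:
  "twice_pd_differentiable (\<lambda>x. complex_of_real (uhs_height N x * x $ a))"
  unfolding uhs_coord_as_mult
  by (rule twice_pd_differentiable_mult[OF twice_pd_differentiable_uhs_height twice_pd_differentiable_coord])

lemma hgrad_uhs_height_uhs_coord:
  assumes "a \<noteq> N"
  shows "hgrad (\<lambda>x. complex_of_real (uhs_height N x)) (\<lambda>x. complex_of_real (uhs_height N x * x $ a)) x = 0"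
  unfolding uhs_coord_as_mult
    grad_form_mult_right[OF twice_pd_differentiableD(1)[OF twice_pd_differentiable_uhs_height]
      twice_pd_differentiableD(1)[OF twice_pd_differentiable_coord]]
    hgrad_uhs_height_coord[OF assms] hgrad_uhs_height_uhs_height
  by (simp add: power2_eq_square)

lemma hgrad_uhs_coord_uhs_coord:
  assumes "a \<noteq> N" "b \<noteq> N"
  shows "hgrad (\<lambda>x. complex_of_real (uhs_height N x * x $ a)) (\<lambda>x. complex_of_real (uhs_height N x * x $ b)) x
    = complex_of_real (if a = b then (uhs_height N x)\<^sup>2 else 0)"
proof -
  let ?T = "\<lambda>x. complex_of_real (uhs_height N x)"
  note diff = twice_pd_differentiableD(1)[OF twice_pd_differentiable_uhs_height]
    twice_pd_differentiableD(1)[OF twice_pd_differentiable_coord]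
  have "hgrad (\<lambda>x. complex_of_real (uhs_height N x * x $ a)) (\<lambda>x. complex_of_real (uhs_height N x * x $ b)) x
     = complex_of_real (uhs_height N x * (uhs_height N x * hmetric_inv x a b + x $ b * (- (x $ a * uhs_height N x)))
       + x $ a * (uhs_height N x * (- (x $ b * uhs_height N x)) + x $ b * (uhs_height N x)\<^sup>2))"
    unfolding uhs_coord_as_mult grad_form_mult_left[OF diff] grad_form_mult_right[OF diff]
      grad_form_sym[OF hmetric_inv_sym, where F = "\<lambda>x. complex_of_real (x $ a)" and G = ?T]
      hgrad_uhs_height_coord[OF assms(1)] hgrad_uhs_height_coord[OF assms(2)]
      hgrad_uhs_height_uhs_height hgrad_coord_coord
    by simp
  also have "\<dots> = complex_of_real (if a = b then (uhs_height N x)\<^sup>2 else 0)"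
    by (simp add: hmetric_inv_def power2_eq_square algebra_simps)
  finally show ?thesis .
qed

lemma hlap_uhs_coord:
  fixes x :: "real^'k::finite"
  assumes "a \<noteq> N"
  shows "hlap (\<lambda>x. complex_of_real (uhs_height N x * x $ a)) x = 0"
proof -
  have "hlap (\<lambda>x. complex_of_real (uhs_height N x * x $ a)) x =
      complex_of_real (uhs_height N x * (real CARD('k) * x $ a)
        + x $ a * ((2 - real CARD('k)) * uhs_height N x) + 2 * (- (x $ a * uhs_height N x)))"
    unfolding uhs_coord_as_mult
      second_order_op_mult[OF twice_pd_differentiable_uhs_height twice_pd_differentiable_coord
        hmetric_inv_sym]
      hlap_coord hlap_uhs_height hgrad_uhs_height_coord[OF assms]
    by simp
  then show ?thesis by (simp add: algebra_simps)
qed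

definition uhs_coords :: "real^('m::finite option) \<Rightarrow> real^'m" where
  "uhs_coords x = (\<chi> l. uhs_height None x * x $ Some l)"

lemma uhs_coords_nth: "uhs_coords x $ l = uhs_height None x * x $ Some l"
  by (simp add: uhs_coords_def)

lemma uhs_coords_differentiable: "uhs_coords differentiable (at x)"
  for x :: "real^('m::finite option)"
proof -
  have "linear (\<lambda>x::real^('m option). (\<chi> l. x $ Some l) :: real^'m)"
    by (auto simp: linear_iff vec_eq_iff)
  then have "bounded_linear (\<lambda>x::real^('m option). (\<chi> l. x $ Some l) :: real^'m)"
    by (simp add: linear_conv_bounded_linear)
  then have "(\<lambda>x. uhs_height None x *\<^sub>R ((\<chi> l. x $ Some l) :: real^'m)) differentiable (at x)"
    by (intro differentiable_scaleR uhs_height_differentiable bounded_linear_imp_differentiable)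
  moreover have "(\<lambda>x. uhs_height None x *\<^sub>R ((\<chi> l. x $ Some l) :: real^'m)) = uhs_coords"
    by (simp add: fun_eq_iff uhs_coords_def vec_eq_iff)
  ultimately show ?thesis by simp
qed

subsection \<open>Separated functions\<close>

lemma euclid_harmonic_twice_pd_differentiable:
  "euclid_harmonic h \<Longrightarrow> twice_pd_differentiable h"
  by (simp add: euclid_harmonic_def twice_pd_differentiable_def)

lemma twice_pd_differentiable_separated:
  fixes h :: "real^'m::finite \<Rightarrow> complex" and Q :: "real \<Rightarrow> complex"
  assumes "twice_pd_differentiable h"
    and "\<And>s. s > 0 \<Longrightarrow> (Q has_vector_derivative Q1 s) (at s)"
    and "\<And>s. s > 0 \<Longrightarrow> (Q1 has_vector_derivative Q2 s) (at s)"
  shows "twice_pd_differentiable (\<lambda>x::real^('m option). Q (uhs_height None x) * h (uhs_coords x))"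
proof -
  have Q1T: "\<And>x. (Q has_vector_derivative Q1 (uhs_height None x)) (at (uhs_height None x))"
   and Q2T: "\<And>x. (Q1 has_vector_derivative Q2 (uhs_height None x)) (at (uhs_height None x))"
    using assms(2,3) uhs_height_pos by blast+
  have Z: "\<And>l. twice_pd_differentiable (\<lambda>x. complex_of_real (uhs_coords x $ l))"
    unfolding uhs_coords_nth by (rule twice_pd_differentiable_uhs_coord)
  show ?thesis
    by (rule twice_pd_differentiable_mult[OF twice_pd_differentiable_comp_real[OF
          uhs_height_differentiable twice_pd_differentiable_uhs_height Q1T Q2T]
          twice_pd_differentiable_comp[OF uhs_coords_differentiable Z assms(1)]])
qed

lemma hlap_separated:
  fixes h :: "real^'m::finite \<Rightarrow> complex" and Q :: "real \<Rightarrow> complex"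
    and x :: "real^('m option)"
  assumes harm: "euclid_harmonic h"
    and Q1: "\<And>s. s > 0 \<Longrightarrow> (Q has_vector_derivative Q1 s) (at s)"
    and Q2: "\<And>s. s > 0 \<Longrightarrow> (Q1 has_vector_derivative Q2 s) (at s)"
  shows "hlap (\<lambda>x. Q (uhs_height None x) * h (uhs_coords x)) x =
    (Q2 (uhs_height None x) * complex_of_real ((uhs_height None x)\<^sup>2)
      + Q1 (uhs_height None x) * complex_of_real ((2 - real CARD('m option)) * uhs_height None x))
    * h (uhs_coords x)"
proof -
  let ?T = "uhs_height None" and ?Z = "\<lambda>l x. complex_of_real (uhs_coords x $ l)"
  let ?A = "\<lambda>x. Q (?T x)" and ?B = "\<lambda>x. h (uhs_coords x)"
  have h: "twice_pd_differentiable h"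
    using harm by (rule euclid_harmonic_twice_pd_differentiable)
  have Q1T: "\<And>x. (Q has_vector_derivative Q1 (?T x)) (at (?T x))"
   and Q2T: "\<And>x. (Q1 has_vector_derivative Q2 (?T x)) (at (?T x))"
    using Q1 Q2 uhs_height_pos by blast+
  have Z: "\<And>l. twice_pd_differentiable (?Z l)"
    unfolding uhs_coords_nth by (rule twice_pd_differentiable_uhs_coord)
  have A: "twice_pd_differentiable ?A"
    by (rule twice_pd_differentiable_comp_real[OF uhs_height_differentiable
          twice_pd_differentiable_uhs_height Q1T Q2T])
  have B: "twice_pd_differentiable ?B"
    by (rule twice_pd_differentiable_comp[OF uhs_coords_differentiable Z h])
  have hlap_A: "hlap ?A x = Q2 (?T x) * complex_of_real ((?T x)\<^sup>2)
      + Q1 (?T x) * complex_of_real ((2 - real CARD('m option)) * ?T x)"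
    unfolding second_order_op_comp_real[OF uhs_height_differentiable
        twice_pd_differentiable_uhs_height Q1T Q2T]
      hgrad_uhs_height_uhs_height hlap_uhs_height ..
  have hlap_B: "hlap ?B x = 0"
  proof -
    have hlap_Z: "\<And>l. hlap (\<lambda>x. complex_of_real (?T x * x $ Some l)) x = 0"
      by (rule hlap_uhs_coord) simp
    have hgrad_Z: "\<And>l m. hgrad (\<lambda>x. complex_of_real (?T x * x $ Some l))
        (\<lambda>x. complex_of_real (?T x * x $ Some m)) x =
        complex_of_real (if Some l = Some m then (?T x)\<^sup>2 else 0)"
      by (rule hgrad_uhs_coord_uhs_coord) simp_all
    have "hlap ?B x = (\<Sum>l\<in>UNIV. \<Sum>m\<in>UNIV. pd m (pd l h) (uhs_coords x) *
        complex_of_real (if l = m then (?T x)\<^sup>2 else 0))"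
      unfolding second_order_op_comp[OF uhs_coords_differentiable Z h] uhs_coords_nth hlap_Z hgrad_Z
      by simp
    also have "\<dots> = complex_of_real ((?T x)\<^sup>2) * (\<Sum>l\<in>UNIV. pd l (pd l h) (uhs_coords x))"
      by (simp add: sum_distrib_left if_distrib mult.commute cong: if_cong)
    finally show ?thesis using harm by (simp add: euclid_harmonic_def)
  qed
  have hgrad_AB: "hgrad ?A ?B x = 0"
  proof -
    have "\<And>l. hgrad (\<lambda>x. complex_of_real (?T x)) (\<lambda>x. complex_of_real (?T x * x $ Some l)) x = 0"
      by (rule hgrad_uhs_height_uhs_coord) simp
    then show ?thesis
      unfolding grad_form_comp_real[OF uhs_height_differentiable Q1T]
        grad_form_comp[OF uhs_coords_differentiable twice_pd_differentiableD(1)[OF h]] uhs_coords_nth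
      by simp
  qed
  show ?thesis
    unfolding second_order_op_mult[OF A B hmetric_inv_sym] hlap_A hlap_B hgrad_AB
    by (simp add: mult.commute)
qed

subsection \<open>Polynomials in the logarithm of the height\<close>

definition deriv_shift_op :: "complex \<Rightarrow> complex poly \<Rightarrow> complex poly" where
  "deriv_shift_op e A = pderiv (pderiv A + smult e A)"

lemma degree_pderiv_add_smult:
  fixes A :: "complex poly"
  assumes "e \<noteq> 0"
  shows "degree (pderiv A + smult e A) = degree A"
proof (cases "degree A = 0")
  case True
  then show ?thesis using assms by (simp add: pderiv_eq_0_iff[THEN iffD2])
next
  case False
  then have "degree (pderiv A) < degree (smult e A)" using assms by (simp add: degree_pderiv)
  then show ?thesis using assms by (simp add: degree_add_eq_right)
qed

lemma degree_deriv_shift_op: "e \<noteq> 0 \<Longrightarrow> degree (deriv_shift_op e A) = degree A - 1"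
  unfolding deriv_shift_op_def by (simp add: degree_pderiv degree_pderiv_add_smult)

lemma deriv_shift_op_eq_0_iff: "e \<noteq> 0 \<Longrightarrow> deriv_shift_op e A = 0 \<longleftrightarrow> degree A = 0"
  unfolding deriv_shift_op_def by (simp add: pderiv_eq_0_iff degree_pderiv_add_smult)

lemma degree_deriv_shift_op_iter:
  "e \<noteq> 0 \<Longrightarrow> degree ((deriv_shift_op e ^^ j) A) = degree A - j"
  by (induction j) (simp_all add: degree_deriv_shift_op)

lemma deriv_shift_op_iter_eq_0_iff:
  assumes "e \<noteq> 0"
  shows "(deriv_shift_op e ^^ j) A = 0 \<longleftrightarrow> A = 0 \<or> degree A < j"
proof (induction j)
  case 0
  then show ?case by simp
next
  case (Suc j)
  then show ?case
    using deriv_shift_op_eq_0_iff[OF assms, of "(deriv_shift_op e ^^ j) A"]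
      degree_deriv_shift_op_iter[OF assms, of j A]
    by auto
qed

lemma deriv_shift_op_iter_monom:
  assumes "e \<noteq> 0"
  shows "(deriv_shift_op e ^^ Suc m) (monom a m) = 0"
    and "\<exists>\<alpha>. (deriv_shift_op e ^^ m) (monom a m) = [:\<alpha>:] \<and> (\<alpha> = 0 \<longleftrightarrow> a = 0)"
proof -
  show "(deriv_shift_op e ^^ Suc m) (monom a m) = 0"
    using deriv_shift_op_iter_eq_0_iff[OF assms, of "Suc m" "monom a m"]
    by (cases "a = 0") (simp_all add: degree_monom_eq del: funpow.simps)
  let ?P = "(deriv_shift_op e ^^ m) (monom a m)"
  have "degree ?P = 0"
    using degree_deriv_shift_op_iter[OF assms] by (cases "a = 0") (simp_all add: degree_monom_eq)
  then have const: "?P = [:coeff ?P 0:]" by (rule degree_0_id[symmetric])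
  then have "coeff ?P 0 = 0 \<longleftrightarrow> ?P = 0" by (metis pCons_eq_0_iff)
  also have "\<dots> \<longleftrightarrow> a = 0"
    using deriv_shift_op_iter_eq_0_iff[OF assms, of m "monom a m"]
    by (cases "a = 0") (simp_all add: degree_monom_eq)
  finally show "\<exists>\<alpha>. ?P = [:\<alpha>:] \<and> (\<alpha> = 0 \<longleftrightarrow> a = 0)" using const by blast
qed

definition exp_poly :: "nat \<Rightarrow> complex poly \<Rightarrow> complex poly \<Rightarrow> real \<Rightarrow> complex" where
  "exp_poly c A B s = poly A (complex_of_real s) + complex_of_real (exp (real c * s)) * poly B (complex_of_real s)"

lemma has_vector_derivative_exp_poly:
  "(exp_poly c A B has_vector_derivative exp_poly c (pderiv A) (pderiv B + smult (of_nat c) B) s) (at s)"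
proof -
  have poly: "((\<lambda>s. poly P (complex_of_real s)) has_vector_derivative
      poly (pderiv P) (complex_of_real s)) (at s)" for P
    by (rule has_vector_derivative_real_field) (rule poly_DERIV)
  have "((\<lambda>s. complex_of_real (exp (real c * s))) has_vector_derivative
      complex_of_real (exp (real c * s) * real c)) (at s)"
    by (rule has_vector_derivative_of_real) (auto intro!: derivative_eq_intros)
  from has_vector_derivative_add[OF poly has_vector_derivative_mult[OF this poly]] show ?thesis
    unfolding exp_poly_def[abs_def] by (simp add: algebra_simps)
qed

lemma has_vector_derivative_comp_ln:
  assumes "\<And>s. (q has_vector_derivative q' s) (at s)" "t > 0"
  shows "((\<lambda>t. q (ln t)) has_vector_derivative q' (ln t) * complex_of_real (1 / t)) (at t)"
proof -
  have "(ln has_vector_derivative (1 / t)) (at t)"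
    using assms(2)
    by (auto intro!: derivative_eq_intros simp: has_real_derivative_iff_has_vector_derivative[symmetric])
  from vector_diff_chain_at[OF this assms(1)] show ?thesis
    by (simp add: o_def scaleR_conv_of_real mult.commute)
qed

lemma has_vector_derivative_exp_poly_ln:
  fixes c A B
  defines "A1 \<equiv> pderiv A" and "B1 \<equiv> pderiv B + smult (of_nat c) B"
  assumes "s > 0"
  shows "((\<lambda>t. exp_poly c A B (ln t)) has_vector_derivative
      exp_poly c A1 B1 (ln s) * complex_of_real (1 / s)) (at s)"
    and "((\<lambda>t. exp_poly c A1 B1 (ln t) * complex_of_real (1 / t)) has_vector_derivative
      exp_poly c A1 B1 (ln s) * complex_of_real (- 1 / s\<^sup>2)
      + exp_poly c (pderiv A1) (pderiv B1 + smult (of_nat c) B1) (ln s)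
        * complex_of_real (1 / s) * complex_of_real (1 / s)) (at s)"
proof -
  show "((\<lambda>t. exp_poly c A B (ln t)) has_vector_derivative
      exp_poly c A1 B1 (ln s) * complex_of_real (1 / s)) (at s)"
    unfolding A1_def B1_def by (rule has_vector_derivative_comp_ln[OF has_vector_derivative_exp_poly assms(3)])
  have "((\<lambda>t. complex_of_real (1 / t)) has_vector_derivative complex_of_real (- 1 / s\<^sup>2)) (at s)"
    using assms(3)
    by (intro has_vector_derivative_of_real) (auto intro!: derivative_eq_intros simp: power2_eq_square)
  from has_vector_derivative_mult[OF has_vector_derivative_comp_ln[OF has_vector_derivative_exp_poly assms(3)] this]
  show "((\<lambda>t. exp_poly c A1 B1 (ln t) * complex_of_real (1 / t)) has_vector_derivative
      exp_poly c A1 B1 (ln s) * complex_of_real (- 1 / s\<^sup>2)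
      + exp_poly c (pderiv A1) (pderiv B1 + smult (of_nat c) B1) (ln s)
        * complex_of_real (1 / s) * complex_of_real (1 / s)) (at s)"
    by (simp add: algebra_simps)
qed

definition tau_pair :: "nat \<Rightarrow> complex poly \<times> complex poly \<Rightarrow> complex poly \<times> complex poly" where
  "tau_pair c P = (deriv_shift_op (- of_nat c) (fst P), deriv_shift_op (of_nat c) (snd P))"

lemma tau_pair_iter:
  "(tau_pair c ^^ j) (A, B) = ((deriv_shift_op (- of_nat c) ^^ j) A, (deriv_shift_op (of_nat c) ^^ j) B)"
  by (induction j) (simp_all add: tau_pair_def)

lemma exp_poly_diff_scaled:
  "exp_poly c A B s - z * exp_poly c A' B' s = exp_poly c (A - smult z A') (B - smult z B') s"
  by (simp add: exp_poly_def algebra_simps)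

lemma hlap_exp_poly_separated:
  fixes h :: "real^'m::finite \<Rightarrow> complex" and x :: "real^('m option)"
  assumes harm: "euclid_harmonic h" and c: "c = CARD('m option) - 1"
  shows "hlap (\<lambda>x. exp_poly c A B (ln (uhs_height None x)) * h (uhs_coords x)) x =
    exp_poly c (deriv_shift_op (- of_nat c) A) (deriv_shift_op (of_nat c) B) (ln (uhs_height None x))
      * h (uhs_coords x)"
proof -
  define A1 where "A1 = pderiv A"
  define B1 where "B1 = pderiv B + smult (of_nat c) B"
  define A2 where "A2 = pderiv A1"
  define B2 where "B2 = pderiv B1 + smult (of_nat c) B1"
  let ?T = "uhs_height None x"
  let ?E1 = "exp_poly c A1 B1 (ln ?T)" and ?E2 = "exp_poly c A2 B2 (ln ?T)"
  have T: "?T > 0" by (rule uhs_height_pos)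
  have "hlap (\<lambda>x. exp_poly c A B (ln (uhs_height None x)) * h (uhs_coords x)) x =
      ((?E1 * complex_of_real (- 1 / ?T\<^sup>2) + ?E2 * complex_of_real (1 / ?T) * complex_of_real (1 / ?T))
          * complex_of_real (?T\<^sup>2)
        + ?E1 * complex_of_real (1 / ?T) * complex_of_real ((2 - real CARD('m option)) * ?T))
      * h (uhs_coords x)"
    unfolding A1_def B1_def A2_def B2_def
    by (rule hlap_separated[OF harm has_vector_derivative_exp_poly_ln])
  also have "(?E1 * complex_of_real (- 1 / ?T\<^sup>2) + ?E2 * complex_of_real (1 / ?T) * complex_of_real (1 / ?T))
          * complex_of_real (?T\<^sup>2)
        + ?E1 * complex_of_real (1 / ?T) * complex_of_real ((2 - real CARD('m option)) * ?T)
      = ?E2 - of_nat c * ?E1"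
  proof -
    have "real c = real CARD('m option) - 1" unfolding c by (simp add: of_nat_diff)
    then have "(1 / ?T) * ((2 - real CARD('m option)) * ?T) = 1 - real c" using T by (simp add: field_simps)
    then have r1: "complex_of_real (1 / ?T) * complex_of_real ((2 - real CARD('m option)) * ?T) = 1 - of_nat c"
      by (metis of_real_1 of_real_diff of_real_mult of_real_of_nat_eq)
    have r2: "complex_of_real (- 1 / ?T\<^sup>2) * complex_of_real (?T\<^sup>2) = - 1"
     and r3: "complex_of_real (1 / ?T) * complex_of_real (1 / ?T) * complex_of_real (?T\<^sup>2) = 1"
      using T by (simp_all flip: of_real_mult add: power2_eq_square)
    have "(?E1 * complex_of_real (- 1 / ?T\<^sup>2) + ?E2 * complex_of_real (1 / ?T) * complex_of_real (1 / ?T))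
          * complex_of_real (?T\<^sup>2)
        + ?E1 * complex_of_real (1 / ?T) * complex_of_real ((2 - real CARD('m option)) * ?T)
      = ?E1 * (complex_of_real (- 1 / ?T\<^sup>2) * complex_of_real (?T\<^sup>2))
        + ?E2 * (complex_of_real (1 / ?T) * complex_of_real (1 / ?T) * complex_of_real (?T\<^sup>2))
        + ?E1 * (complex_of_real (1 / ?T) * complex_of_real ((2 - real CARD('m option)) * ?T))"
      by (simp only: algebra_simps)
    then show ?thesis unfolding r1 r2 r3 by (simp add: algebra_simps)
  qed
  also have "?E2 - of_nat c * ?E1 =
      exp_poly c (deriv_shift_op (- of_nat c) A) (deriv_shift_op (of_nat c) B) (ln ?T)"
    unfolding exp_poly_diff_scaled A2_def A1_def B2_def B1_def deriv_shift_op_def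
    by (simp add: pderiv_diff pderiv_smult)
  finally show ?thesis .
qed

subsection \<open>Iterating the tension field\<close>

definition horo_ansatz ::
    "nat \<Rightarrow> (real^'m::finite \<Rightarrow> complex) \<Rightarrow> complex poly \<times> complex poly \<Rightarrow>
     real \<times> (real^('m option)) \<Rightarrow> complex" where
  "horo_ansatz c h P y =
     exp_poly c (fst P) (snd P) (ln (2 / (fst y + snd y $ None)))
     * h (\<chi> i. 2 * snd y $ Some i / (fst y + snd y $ None))"

lemma hchart_in_hyperboloid: "hchart x \<in> hyperboloid"
  unfolding hchart_eq hyperboloid_def using chart_y0_sq[of x] chart_y0_pos[of x]
  by (simp add: inner_self_vec power2_eq_square)

lemma hchart_snd: "y \<in> hyperboloid \<Longrightarrow> hchart (snd y) = y"
  unfolding hyperboloid_def hchart_def by (auto simp: real_sqrt_unique)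

lemma horo_ansatz_hchart:
  "horo_ansatz c h P (hchart x) = exp_poly c (fst P) (snd P) (ln (uhs_height None x)) * h (uhs_coords x)"
proof -
  have "uhs_coords x = (\<chi> i. 2 * x $ Some i / (chart_y0 x + x $ None))"
    by (simp add: uhs_coords_def uhs_height_def horo_def vec_eq_iff)
  then show ?thesis unfolding horo_ansatz_def hchart_eq by (simp add: uhs_height_def horo_def)
qed

lemma tau_H_horo_ansatz:
  fixes h :: "real^'m::finite \<Rightarrow> complex" and F :: "real \<times> (real^('m option)) \<Rightarrow> complex"
  assumes harm: "euclid_harmonic h" and c: "c = CARD('m option) - 1"
    and F: "\<And>y. y \<in> hyperboloid \<Longrightarrow> F y = horo_ansatz c h P y"
    and y: "y \<in> hyperboloid"
  shows "tau_H F y = horo_ansatz c h (tau_pair c P) y"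
proof -
  obtain A B where P: "P = (A, B)" by (cases P)
  let ?G = "\<lambda>x. exp_poly c A B (ln (uhs_height None x)) * h (uhs_coords x)"
  have "F \<circ> hchart = ?G"
    by (simp add: fun_eq_iff F[OF hchart_in_hyperboloid] horo_ansatz_hchart P)
  moreover have "\<And>i. pd i ?G differentiable (at x)" for x
    by (rule twice_pd_differentiableD(2)[OF twice_pd_differentiable_separated[OF
          euclid_harmonic_twice_pd_differentiable[OF harm] has_vector_derivative_exp_poly_ln]])
  ultimately have "tau_H F y = hlap ?G (snd y)"
    by (simp add: tau_H_def lb_coord_hmetric)
  also have "\<dots> = horo_ansatz c h (tau_pair c P) (hchart (snd y))"
    unfolding hlap_exp_poly_separated[OF harm c] horo_ansatz_hchart P tau_pair_def by simp
  finally show ?thesis using hchart_snd[OF y] by simp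
qed

lemma tau_H_iter_horo_ansatz:
  fixes h :: "real^'m::finite \<Rightarrow> complex" and f :: "real \<times> (real^('m option)) \<Rightarrow> complex"
  assumes harm: "euclid_harmonic h" and c: "c = CARD('m option) - 1"
    and f: "\<And>y. y \<in> hyperboloid \<Longrightarrow> f y = horo_ansatz c h P y"
  shows "y \<in> hyperboloid \<Longrightarrow> (tau_H ^^ j) f y = horo_ansatz c h ((tau_pair c ^^ j) P) y"
proof (induction j arbitrary: y)
  case 0
  then show ?case using f by simp
next
  case (Suc j)
  then show ?case using tau_H_horo_ansatz[OF harm c Suc.IH] by simp
qed

lemma uhs_coordinates_surj:
  fixes z :: "real^'m::finite"
  assumes "t > 0"
  shows "\<exists>x::real^('m option). uhs_height None x = t \<and> uhs_coords x = z"
proof -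
  define u where "u = 2 / t"
  define K where "K = (\<Sum>l\<in>UNIV. (z $ l / t)\<^sup>2)"
  define x0 where "x0 = (u\<^sup>2 - 1 - K) / (2 * u)"
  define x :: "real^('m option)" where "x = (\<chi> i. case i of None \<Rightarrow> x0 | Some l \<Rightarrow> z $ l / t)"
  have u: "u > 0" using assms by (simp add: u_def)
  have K: "K \<ge> 0" unfolding K_def by (simp add: sum_nonneg)
  have "x \<bullet> x = x0\<^sup>2 + K"
    by (simp add: inner_vec_def UNIV_option_conv sum.reindex x_def K_def power2_eq_square)
  then have "(u - x0)\<^sup>2 = 1 + x \<bullet> x"
    using u by (simp add: x0_def field_simps power2_eq_square)
  moreover have "u - x0 > 0"
    using u K by (simp add: x0_def field_simps power2_eq_square add_pos_nonneg)
  ultimately have "chart_y0 x = u - x0"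
    unfolding chart_y0_def by (metis real_sqrt_unique less_imp_le)
  then have "horo None x = u" by (simp add: horo_def x_def)
  then have "uhs_height None x = t" using assms by (simp add: uhs_height_def u_def)
  moreover have "uhs_coords x = z"
    using assms \<open>uhs_height None x = t\<close> by (simp add: uhs_coords_def x_def vec_eq_iff)
  ultimately show ?thesis by blast
qed

lemma exists_pos_power_combination_neq_0:
  fixes \<alpha> \<beta> :: complex
  assumes "(\<alpha>, \<beta>) \<noteq> (0, 0)" "c \<ge> 1"
  shows "\<exists>t > 0. \<alpha> + complex_of_real (t ^ c) * \<beta> \<noteq> 0"
proof (cases "\<alpha> + \<beta> = 0")
  case False
  then show ?thesis by (intro exI[of _ 1]) simp
next
  case True
  then have \<alpha>: "\<alpha> = - \<beta>" by (simp add: add_eq_0_iff)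
  have "(2::real) ^ c \<ge> 2 ^ 1" by (rule power_increasing[OF assms(2)]) simp
  then have "(2::real) ^ c \<noteq> 1" by simp
  then have "complex_of_real (2 ^ c) - 1 \<noteq> 0" by (metis of_real_eq_1_iff right_minus_eq)
  moreover have "\<beta> \<noteq> 0" using \<alpha> assms(1) by auto
  moreover have "\<alpha> + complex_of_real (2 ^ c) * \<beta> = (complex_of_real (2 ^ c) - 1) * \<beta>"
    by (simp add: \<alpha> algebra_simps)
  ultimately show ?thesis by (intro exI[of _ 2]) simp
qed

lemma hyperboloid_uhs_coordinates:
  fixes w :: "real^('m::finite option)"
  assumes "(y0, w) \<in> hyperboloid"
  shows "2 * sqrt (y0\<^sup>2 - (\<Sum>i\<in>UNIV. (w $ i)\<^sup>2)) / (y0 + w $ None) = uhs_height None w"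
    and "(\<chi> i. 2 * w $ Some i / (y0 + w $ None)) = uhs_coords w"
proof -
  have y0: "y0 = chart_y0 w" using hchart_snd[OF assms] by (simp add: hchart_eq)
  then have "y0\<^sup>2 - (\<Sum>i\<in>UNIV. (w $ i)\<^sup>2) = 1"
    using chart_y0_sq[of w] by (simp add: inner_self_vec power2_eq_square)
  then show "2 * sqrt (y0\<^sup>2 - (\<Sum>i\<in>UNIV. (w $ i)\<^sup>2)) / (y0 + w $ None) = uhs_height None w"
    by (simp add: y0 uhs_height_def horo_def)
  show "(\<chi> i. 2 * w $ Some i / (y0 + w $ None)) = uhs_coords w"
    by (simp add: y0 vec_eq_iff uhs_coords_def uhs_height_def horo_def)
qed

lemma exp_poly_monom_ln:
  "t > 0 \<Longrightarrow> exp_poly c (monom a m) (monom b m) (ln t) =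
    (a + b * complex_of_real t ^ c) * complex_of_real (ln t) ^ m"
  by (simp add: exp_poly_def poly_monom exp_of_nat_mult algebra_simps flip: of_real_power)

lemma tau_pair_iter_monom:
  assumes "c \<ge> 1"
  shows "(tau_pair c ^^ Suc m) (monom a m, monom b m) = (0, 0)"
    and "\<exists>\<alpha> \<beta>. (tau_pair c ^^ m) (monom a m, monom b m) = ([:\<alpha>:], [:\<beta>:]) \<and>
      ((\<alpha>, \<beta>) = (0, 0) \<longleftrightarrow> (a, b) = (0, 0))"
proof -
  have c: "(of_nat c :: complex) \<noteq> 0" "(- of_nat c :: complex) \<noteq> 0" using assms by auto
  show "(tau_pair c ^^ Suc m) (monom a m, monom b m) = (0, 0)"
    unfolding tau_pair_iter
    using deriv_shift_op_iter_monom(1)[OF c(2), of m a] deriv_shift_op_iter_monom(1)[OF c(1), of m b]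
    by (simp del: funpow.simps)
  obtain \<alpha> \<beta> where "(deriv_shift_op (- of_nat c) ^^ m) (monom a m) = [:\<alpha>:]" "\<alpha> = 0 \<longleftrightarrow> a = 0"
    and "(deriv_shift_op (of_nat c) ^^ m) (monom b m) = [:\<beta>:]" "\<beta> = 0 \<longleftrightarrow> b = 0"
    using deriv_shift_op_iter_monom(2)[OF c(2), of m a] deriv_shift_op_iter_monom(2)[OF c(1), of m b]
    by blast
  then show "\<exists>\<alpha> \<beta>. (tau_pair c ^^ m) (monom a m, monom b m) = ([:\<alpha>:], [:\<beta>:]) \<and>
      ((\<alpha>, \<beta>) = (0, 0) \<longleftrightarrow> (a, b) = (0, 0))"
    unfolding tau_pair_iter by auto
qed

lemma horo_ansatz_zero: "horo_ansatz c h (0, 0) y = 0"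
  by (simp add: horo_ansatz_def exp_poly_def)

lemma horo_ansatz_const_nonzero:
  fixes h :: "real^'m::finite \<Rightarrow> complex"
  assumes "(\<alpha>, \<beta>) \<noteq> (0, 0)" "c \<ge> 1" "h z \<noteq> 0"
  shows "\<exists>y\<in>hyperboloid. horo_ansatz c h ([:\<alpha>:], [:\<beta>:]) y \<noteq> 0"
proof -
  obtain t where t: "t > 0" "\<alpha> + complex_of_real (t ^ c) * \<beta> \<noteq> 0"
    using exists_pos_power_combination_neq_0[OF assms(1,2)] by blast
  obtain x :: "real^('m option)" where x: "uhs_height None x = t" "uhs_coords x = z"
    using uhs_coordinates_surj[OF t(1)] by blast
  have "horo_ansatz c h ([:\<alpha>:], [:\<beta>:]) (hchart x) = (\<alpha> + complex_of_real (t ^ c) * \<beta>) * h z"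
    unfolding horo_ansatz_hchart x using t(1) by (simp add: exp_poly_def exp_of_nat_mult)
  then show ?thesis using t(2) assms(3) hchart_in_hyperboloid[of x] by (intro bexI[of _ "hchart x"]) simp_all
qed

theorem theorem4p3:
  fixes h :: "real^'m::finite \<Rightarrow> complex"
    and r :: nat and a b :: complex
    and p :: "real \<Rightarrow> complex"
    and f :: "real \<times> (real^('m option)) \<Rightarrow> complex"
  assumes harm: "euclid_harmonic h"
    and nonconst: "\<exists>x y. h x \<noteq> h y"
    and r: "r \<ge> 1"
    and ab: "(a, b) \<noteq> (0, 0)"
    and p_def: "\<And>t. t > 0 \<Longrightarrow>
        p t = (a + b * complex_of_real t ^ (CARD('m option) - 1)) * complex_of_real (ln t) ^ (r - 1)"
    and f_def: "\<And>y0 w. (y0, w) \<in> hyperboloid \<Longrightarrow>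
        f (y0, w) = p (2 * sqrt (y0^2 - (\<Sum>i\<in>UNIV. (w $ i)^2)) / (y0 + w $ None)) *
                    h (\<chi> i. 2 * w $ Some i / (y0 + w $ None))"
  shows "proper_r_harmonic_H r f"
proof -
  define c where "c = CARD('m option) - 1"
  have c: "c \<ge> 1" by (simp add: c_def card_UNIV_option)
  define P where "P = (monom a (r - 1), monom b (r - 1))"
  have "f y = horo_ansatz c h P y" if "y \<in> hyperboloid" for y
    using that f_def[of "fst y" "snd y"] hyperboloid_uhs_coordinates[of "fst y" "snd y"]
      hchart_snd[OF that] horo_ansatz_hchart[of c h P "snd y"]
    by (simp add: p_def uhs_height_pos exp_poly_monom_ln P_def c_def)
  then have iter: "\<And>j y. y \<in> hyperboloid \<Longrightarrow> (tau_H ^^ j) f y = horo_ansatz c h ((tau_pair c ^^ j) P) y"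
    using tau_H_iter_horo_ansatz[OF harm c_def] by blast
  have "(tau_pair c ^^ r) P = (0, 0)"
    using tau_pair_iter_monom(1)[OF c, of "r - 1"] r by (simp add: P_def del: funpow.simps)
  moreover obtain \<alpha> \<beta> where "(tau_pair c ^^ (r - 1)) P = ([:\<alpha>:], [:\<beta>:])" "(\<alpha>, \<beta>) \<noteq> (0, 0)"
    using tau_pair_iter_monom(2)[OF c, where m = "r - 1" and a = a and b = b] ab by (auto simp: P_def)
  moreover obtain z where "h z \<noteq> 0" using nonconst by metis
  ultimately show ?thesis
    unfolding proper_r_harmonic_H_def
    using iter horo_ansatz_zero horo_ansatz_const_nonzero[OF _ c] by metis
qed

end
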